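(* Let $g,n\ge1$ be integers and $\mathcal{A},\mathcal{B}\in\mathcal{D}_{g,n}$ weight data. (1) If $\mathcal{A}\le\mathcal{B}$, then $M^{trop}_{g,\mathcal{A}}\subset M^{trop}_{g,\mathcal{B}}$. (2) If $\mathcal{A}$ and $\mathcal{B}$ are in the same chamber, then $M^{trop}_{g,\mathcal{A}}=M^{trop}_{g,\mathcal{B}}$. (3) If $\mathcal{A}$ and $\mathcal{B}$ are obtained one from the other by a permutation of coordinates, then $M^{trop}_{g,\mathcal{A}}$ is homeomorphic to $M^{trop}_{g,\mathcal{B}}$ through a relabeling homeomorphism. (4) If $\mathcal{A}$ and $\mathcal{B}$ are in chambers belonging to the same $S_n$-orbit, then $M^{trop}_{g,\mathcal{A}}$ is homeomorphic to $M^{trop}_{g,\mathcal{B}}$ through a relabeling homeomorphism. The same statements hold with $M^{trop}_{g,\cdot}$ replaced by $\overline{M}^{trop}_{g,\cdot}$ or by $\Delta_{g,\cdot}$.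
   Context: A weight datum is $\mathcal{A}=(a_1,\dots,a_n)$ with $a_i\in\mathbb{Q}\cap(0,1]$ and $2g-2+\sum_i a_i>0$; $\mathcal{D}_{g,n}\subset\mathbb{R}^n$ is the set of weight data; $\mathcal{A}\le\mathcal{B}$ means $a_i\le b_i$ for all $i$. For $S\subseteq\{1,\dots,n\}$ with $2\le|S|\le n$, the wall $w_S$ is the locus $\sum_{i\in S}a_i=1$; chambers are the connected components of the complement in $\mathcal{D}_{g,n}$ of all walls. $S_n$ acts on $\mathcal{D}_{g,n}$ by permuting coordinates, hence on chambers. A $(g,\mathcal{A})$-stable graph is a finite connected graph $G$ (loops and multiple edges allowed) with vertex weight $w:V(G)\to\mathbb{Z}_{\ge0}$ and $n$ legs labelled $1,\dots,n$ attached via $m:\{1,\dots,n\}\to V(G)$, with $b_1(G)+\sum_v w(v)=g$ and $2w(v)-2+|v|_E+|v|_{\mathcal{A}}>0$ for every vertex $v$, where $|v|_E$ is the number of edge half-edges at $v$ (loops counted twice) and $|v|_{\mathcal{A}}=\sum_{m(i)=v}a_i$. A $(g,\mathcal{A})$-stable tropical curve is such a graph with edge lengths in $\mathbb{R}_{>0}$; $M^{trop}_{g,\mathcal{A}}$ is the space of isomorphism classes of such curves, topologized as the colimit of the cones $\mathbb{R}_{\ge0}^{E(G)}$ glued along weighted edge contractions (length $0$ edges contracted) and isomorphisms. $\overline{M}^{trop}_{g,\mathcal{A}}$ is defined analogously allowing edge lengths in $\mathbb{R}_{>0}\cup\{\infty\}$, and $\Delta_{g,\mathcal{A}}$ is the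 subspace of $M^{trop}_{g,\mathcal{A}}$ of curves of total edge length $1$. A relabeling homeomorphism associated with $\sigma\in S_n$ sends a tropical curve to the curve obtained by relabeling its legs according to $\sigma$. *)

theory Defs
  imports "HOL-Analysis.Analysis"
begin

text \<open>A weight datum with n entries is represented as a function a :: nat => real whose
  relevant values are a 1, ..., a n; we normalise by requiring a i = 0 for i outside {1..n},
  so that the region of weight data is a subset of the product space nat => real (product
  topology), which is homeomorphic to R^n on that region.\<close>

definition wregion :: "nat \<Rightarrow> nat \<Rightarrow> (nat \<Rightarrow> real) set" where
  "wregion g n = {a. (\<forall>i\<in>{1..n}. 0 < a i \<and> a i \<le> 1) \<and> (\<forall>i. i \<notin> {1..n} \<longrightarrow> a i = 0)
                     \<and> 2 * real g - 2 + (\<Sum>i\<in>{1..n}. a i) > 0}"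

definition weight_datum :: "nat \<Rightarrow> nat \<Rightarrow> (nat \<Rightarrow> real) \<Rightarrow> bool" where
  "weight_datum g n a \<longleftrightarrow> a \<in> wregion g n \<and> (\<forall>i\<in>{1..n}. a i \<in> \<rat>)"

definition walls :: "nat \<Rightarrow> (nat \<Rightarrow> real) set" where
  "walls n = {a. \<exists>S. S \<subseteq> {1..n} \<and> 2 \<le> card S \<and> (\<Sum>i\<in>S. a i) = 1}"

definition chamber :: "nat \<Rightarrow> nat \<Rightarrow> (nat \<Rightarrow> real) \<Rightarrow> (nat \<Rightarrow> real) set" where
  "chamber g n a = connected_component_set (wregion g n - walls n) a"

definition in_some_chamber :: "nat \<Rightarrow> nat \<Rightarrow> (nat \<Rightarrow> real) \<Rightarrow> bool" where
  "in_some_chamber g n a \<longleftrightarrow> a \<in> wregion g n - walls n"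

definition same_chamber :: "nat \<Rightarrow> nat \<Rightarrow> (nat \<Rightarrow> real) \<Rightarrow> (nat \<Rightarrow> real) \<Rightarrow> bool" where
  "same_chamber g n a b \<longleftrightarrow> connected_component (wregion g n - walls n) a b"

definition perm_wt :: "nat \<Rightarrow> (nat \<Rightarrow> nat) \<Rightarrow> (nat \<Rightarrow> real) \<Rightarrow> (nat \<Rightarrow> real)" where
  "perm_wt n \<sigma> c = (\<lambda>i. if i \<in> {1..n} then c (\<sigma> i) else 0)"

definition le_wt :: "nat \<Rightarrow> (nat \<Rightarrow> real) \<Rightarrow> (nat \<Rightarrow> real) \<Rightarrow> bool" where
  "le_wt n a b \<longleftrightarrow> (\<forall>i\<in>{1..n}. a i \<le> b i)"

text \<open>Leg i (1 \<le> i \<le> n) is attached at vertex leg i. Edge lengths are extended reals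
  (the value \<infinity> is only allowed for the compactified space).\<close>

record tcurve =
  verts :: "nat set"
  edges :: "nat set"
  ends :: "nat \<Rightarrow> nat \<times> nat"
  wt :: "nat \<Rightarrow> nat"
  leg :: "nat \<Rightarrow> nat"
  len :: "nat \<Rightarrow> ereal"

definition adjrel :: "tcurve \<Rightarrow> nat set \<Rightarrow> (nat \<times> nat) set" where
  "adjrel C Z = (\<lambda>e. ends C e) ` Z \<union> (\<lambda>e. prod.swap (ends C e)) ` Z"

definition wf_graph :: "nat \<Rightarrow> tcurve \<Rightarrow> bool" where
  "wf_graph n C \<longleftrightarrow> finite (verts C) \<and> finite (edges C) \<and> verts C \<noteq> {}
     \<and> (\<forall>e\<in>edges C. fst (ends C e) \<in> verts C \<and> snd (ends C e) \<in> verts C)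
     \<and> (\<forall>i\<in>{1..n}. leg C i \<in> verts C)
     \<and> (\<forall>u\<in>verts C. \<forall>v\<in>verts C. (u, v) \<in> (adjrel C (edges C))\<^sup>*)"

text \<open>Genus b_1(G) + sum of vertex weights, with b_1 = |E| - |V| + 1 for a connected graph.\<close>
definition genus :: "tcurve \<Rightarrow> int" where
  "genus C = int (card (edges C)) - int (card (verts C)) + 1 + int (\<Sum>v\<in>verts C. wt C v)"

text \<open>Number of edge half-edges at v (loops counted twice).\<close>
definition val :: "tcurve \<Rightarrow> nat \<Rightarrow> nat" where
  "val C v = card {e\<in>edges C. fst (ends C e) = v} + card {e\<in>edges C. snd (ends C e) = v}"

definition legwt :: "nat \<Rightarrow> (nat \<Rightarrow> real) \<Rightarrow> tcurve \<Rightarrow> nat \<Rightarrow> real" where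
  "legwt n a C v = (\<Sum>i\<in>{i\<in>{1..n}. leg C i = v}. a i)"

definition stable_graph :: "nat \<Rightarrow> nat \<Rightarrow> (nat \<Rightarrow> real) \<Rightarrow> tcurve \<Rightarrow> bool" where
  "stable_graph g n a C \<longleftrightarrow> wf_graph n C \<and> genus C = int g
     \<and> (\<forall>v\<in>verts C. 2 * real (wt C v) - 2 + real (val C v) + legwt n a C v > 0)"

definition trop_curve :: "nat \<Rightarrow> nat \<Rightarrow> (nat \<Rightarrow> real) \<Rightarrow> tcurve \<Rightarrow> bool" where
  "trop_curve g n a C \<longleftrightarrow> stable_graph g n a C \<and> (\<forall>e\<in>edges C. 0 < len C e \<and> len C e < \<infinity>)"

definition ext_trop_curve :: "nat \<Rightarrow> nat \<Rightarrow> (nat \<Rightarrow> real) \<Rightarrow> tcurve \<Rightarrow> bool" where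
  "ext_trop_curve g n a C \<longleftrightarrow> stable_graph g n a C \<and> (\<forall>e\<in>edges C. 0 < len C e)"

definition curve_iso :: "nat \<Rightarrow> tcurve \<Rightarrow> tcurve \<Rightarrow> bool" where
  "curve_iso n C D \<longleftrightarrow> (\<exists>f h. bij_betw f (verts C) (verts D) \<and> bij_betw h (edges C) (edges D)
     \<and> (\<forall>v\<in>verts C. wt D (f v) = wt C v)
     \<and> (\<forall>i\<in>{1..n}. leg D i = f (leg C i))
     \<and> (\<forall>e\<in>edges C. len D (h e) = len C e
          \<and> (ends D (h e) = map_prod f f (ends C e) \<or> ends D (h e) = prod.swap (map_prod f f (ends C e)))))"

definition iso_class :: "nat \<Rightarrow> tcurve \<Rightarrow> tcurve set" where
  "iso_class n C = {D. curve_iso n C D}"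

text \<open>Contract the set Z of edges: each connected component of the subgraph (verts C, Z)
  becomes one vertex (named by its least element), whose weight is the sum of the weights plus
  the first Betti number |E_c| - |V_c| + 1 of the component.\<close>
definition zrep :: "tcurve \<Rightarrow> nat set \<Rightarrow> nat \<Rightarrow> nat" where
  "zrep C Z v = Min {u\<in>verts C. (v, u) \<in> (adjrel C Z)\<^sup>*}"

definition contract :: "tcurve \<Rightarrow> nat set \<Rightarrow> tcurve" where
  "contract C Z =
     \<lparr> verts = zrep C Z ` verts C,
       edges = edges C - Z,
       ends = (\<lambda>e. map_prod (zrep C Z) (zrep C Z) (ends C e)),
       wt = (\<lambda>u. ((\<Sum>v\<in>{v\<in>verts C. zrep C Z v = u}. wt C v)
                  + card {e\<in>Z. zrep C Z (fst (ends C e)) = u} + 1)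
                 - card {v\<in>verts C. zrep C Z v = u}),
       leg = (\<lambda>i. zrep C Z (leg C i)),
       len = len C \<rparr>"

definition cone_map :: "nat \<Rightarrow> tcurve \<Rightarrow> (nat \<Rightarrow> ereal) \<Rightarrow> tcurve set" where
  "cone_map n G l = iso_class n ((contract G {e\<in>edges G. l e = 0}) \<lparr>len := l\<rparr>)"

text \<open>The cone R_{\<ge>0}^{E(G)} resp. [0,\<infinity>]^{E(G)}, as a subset of nat => ereal
  (product topology; coordinates outside E(G) are fixed to 0).\<close>
definition cone :: "tcurve \<Rightarrow> (nat \<Rightarrow> ereal) set" where
  "cone G = {l. (\<forall>e\<in>edges G. 0 \<le> l e \<and> l e < \<infinity>) \<and> (\<forall>e. e \<notin> edges G \<longrightarrow> l e = 0)}"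

definition ext_cone :: "tcurve \<Rightarrow> (nat \<Rightarrow> ereal) set" where
  "ext_cone G = {l. (\<forall>e\<in>edges G. 0 \<le> l e) \<and> (\<forall>e. e \<notin> edges G \<longrightarrow> l e = 0)}"

text \<open>Colimit topology: the final topology on the set P of points with respect to all cone maps.\<close>
definition colim_top :: "tcurve set set \<Rightarrow> tcurve set \<Rightarrow> (tcurve \<Rightarrow> (nat \<Rightarrow> ereal) set)
                          \<Rightarrow> (tcurve \<Rightarrow> (nat \<Rightarrow> ereal) \<Rightarrow> tcurve set) \<Rightarrow> tcurve set topology" where
  "colim_top P Gs cn cm = topology (\<lambda>U. U \<subseteq> P \<and>
      (\<forall>G\<in>Gs. openin (top_of_set (cn G)) {l \<in> cn G. cm G l \<in> U}))"

definition tropM :: "nat \<Rightarrow> nat \<Rightarrow> (nat \<Rightarrow> real) \<Rightarrow> tcurve set topology" where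
  "tropM g n a = colim_top {iso_class n C | C. trop_curve g n a C}
                           {G. stable_graph g n a G} cone (cone_map n)"

definition tropMbar :: "nat \<Rightarrow> nat \<Rightarrow> (nat \<Rightarrow> real) \<Rightarrow> tcurve set topology" where
  "tropMbar g n a = colim_top {iso_class n C | C. ext_trop_curve g n a C}
                           {G. stable_graph g n a G} ext_cone (cone_map n)"

definition total_len :: "tcurve \<Rightarrow> ereal" where
  "total_len C = (\<Sum>e\<in>edges C. len C e)"

definition tropDelta :: "nat \<Rightarrow> nat \<Rightarrow> (nat \<Rightarrow> real) \<Rightarrow> tcurve set topology" where
  "tropDelta g n a = subtopology (tropM g n a)
      {p \<in> topspace (tropM g n a). \<exists>C\<in>p. total_len C = 1}"

definition relabel :: "(nat \<Rightarrow> nat) \<Rightarrow> tcurve \<Rightarrow> tcurve" where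
  "relabel \<sigma> C = C\<lparr>leg := (\<lambda>i. leg C (\<sigma> i))\<rparr>"

definition relabel_map :: "nat \<Rightarrow> (nat \<Rightarrow> nat) \<Rightarrow> tcurve set \<Rightarrow> tcurve set" where
  "relabel_map n \<sigma> p = {D. \<exists>C\<in>p. curve_iso n (relabel \<sigma> C) D}"

end

(*
  Everything reduces to how stability of a graph depends on the weights.  Stability is monotone
  in the weights, so for A <= B every A-curve is a B-curve, and a set open for A becomes open for
  B after adding all curves that are B- but not A-stable, because inside each cone the A-stable
  points are cut out by finitely many closed faces.
  In genus at least one every vertex has 2w - 2 + val >= -1, so its stability only asks whether
  it carries legs and whether their weights sum to more than 1; the latter cannot change inside a
  chamber, where no such sum crosses a wall.  Relabelling legs by a permutation transports
  A-stable graphs to stable graphs for the permuted weights and commutes with the cone maps,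
  which gives the homeomorphisms; an orbit of chambers reduces to a relabelling followed by a
  move inside one chamber.  For Delta one restricts to curves of total length 1, which
  relabelling preserves.
*)
theory Submission
  imports Defs
begin

lemma istopology_colim:
  "istopology (\<lambda>U. U \<subseteq> P \<and> (\<forall>G\<in>Gs. openin (top_of_set (cn G)) {l \<in> cn G. cm G l \<in> U}))"
proof -
  have "{l \<in> cn G. cm G l \<in> S \<inter> T} = {l \<in> cn G. cm G l \<in> S} \<inter> {l \<in> cn G. cm G l \<in> T}"
    and "{l \<in> cn G. cm G l \<in> \<Union>K} = (\<Union>U\<in>K. {l \<in> cn G. cm G l \<in> U})" for G S T K
    by auto
  then show ?thesis
    unfolding istopology_def by auto
qed

lemma openin_colim_top:
  "openin (colim_top P Gs cn cm) U \<longleftrightarrow>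
     U \<subseteq> P \<and> (\<forall>G\<in>Gs. openin (top_of_set (cn G)) {l \<in> cn G. cm G l \<in> U})"
  unfolding colim_top_def by (simp add: topology_inverse'[OF istopology_colim])

lemma topspace_colim_top:
  assumes "\<And>G l. G \<in> Gs \<Longrightarrow> l \<in> cn G \<Longrightarrow> cm G l \<in> P"
  shows "topspace (colim_top P Gs cn cm) = P"
proof -
  have "openin (colim_top P Gs cn cm) P"
  proof -
    have "{l \<in> cn G. cm G l \<in> P} = cn G" if "G \<in> Gs" for G
      using assms that by auto
    then show ?thesis
      unfolding openin_colim_top by auto
  qed
  then show ?thesis
    by (meson openin_colim_top openin_subset openin_topspace subset_antisym)
qed

section \<open>Connectivity of graphs\<close>

lemma adjrel_iff: "(x, y) \<in> adjrel C Z \<longleftrightarrow> (\<exists>e\<in>Z. ends C e = (x, y) \<or> ends C e = (y, x))"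
proof
  assume "(x, y) \<in> adjrel C Z"
  then show "\<exists>e\<in>Z. ends C e = (x, y) \<or> ends C e = (y, x)"
    unfolding adjrel_def by (auto simp: prod.swap_def)
next
  assume "\<exists>e\<in>Z. ends C e = (x, y) \<or> ends C e = (y, x)"
  then show "(x, y) \<in> adjrel C Z"
    unfolding adjrel_def by (metis UnI1 UnI2 image_eqI swap_simp)
qed

lemma edge_in_adjrel: "e \<in> Z \<Longrightarrow> ends C e \<in> adjrel C Z"
  unfolding adjrel_def by simp

lemma rtrancl_adjrel_mono:
  assumes "Y \<subseteq> Z" "(x, y) \<in> (adjrel C Y)\<^sup>*"
  shows "(x, y) \<in> (adjrel C Z)\<^sup>*"
proof -
  have "adjrel C Y \<subseteq> adjrel C Z"
    using assms(1) unfolding adjrel_def by blast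
  then show ?thesis
    using assms(2) rtrancl_mono by blast
qed

lemma rtrancl_adjrel_sym:
  assumes "(x, y) \<in> (adjrel C Z)\<^sup>*"
  shows "(y, x) \<in> (adjrel C Z)\<^sup>*"
proof -
  have "sym (adjrel C Z)"
    unfolding sym_def adjrel_iff by blast
  then show ?thesis
    using assms by (meson sym_rtrancl symD)
qed

definition connects :: "tcurve \<Rightarrow> nat set \<Rightarrow> nat set \<Rightarrow> bool" where
  "connects C F K \<longleftrightarrow> (\<forall>e\<in>F. fst (ends C e) \<in> K \<and> snd (ends C e) \<in> K)
     \<and> (\<forall>x\<in>K. \<forall>y\<in>K. (x, y) \<in> (adjrel C F)\<^sup>*)"

lemma rtrancl_adjrel_restrict:
  assumes "(x, y) \<in> (adjrel C F)\<^sup>*" "x \<in> S" "\<forall>e\<in>F. fst (ends C e) \<in> S \<longleftrightarrow> snd (ends C e) \<in> S"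
  shows "(x, y) \<in> (adjrel C {e\<in>F. fst (ends C e) \<in> S})\<^sup>* \<and> y \<in> S"
  using assms(1)
proof (induction rule: rtrancl_induct)
  case base
  then show ?case using assms(2) by simp
next
  case (step y z)
  then obtain e where e: "e \<in> F" "ends C e = (y, z) \<or> ends C e = (z, y)"
    by (auto simp: adjrel_iff)
  with step.IH assms(3) have "fst (ends C e) \<in> S" "snd (ends C e) \<in> S"
    by (metis fst_conv snd_conv)+
  with e have "(y, z) \<in> adjrel C {e\<in>F. fst (ends C e) \<in> S}" "z \<in> S"
    by (auto simp: adjrel_iff)
  with step.IH show ?case
    by (meson rtrancl.rtrancl_into_rtrancl)
qed

lemma component_edge_closed:
  assumes "\<forall>e\<in>F. fst (ends C e) \<in> K \<and> snd (ends C e) \<in> K" "e \<in> F"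
  shows "fst (ends C e) \<in> {x\<in>K. (c, x) \<in> (adjrel C F)\<^sup>*} \<longleftrightarrow> snd (ends C e) \<in> {x\<in>K. (c, x) \<in> (adjrel C F)\<^sup>*}"
proof -
  have "(fst (ends C e), snd (ends C e)) \<in> adjrel C F \<and> (snd (ends C e), fst (ends C e)) \<in> adjrel C F"
    using assms(2) unfolding adjrel_iff by (intro conjI bexI[of _ e]) auto
  then show ?thesis
    using assms by (auto intro: rtrancl.rtrancl_into_rtrancl)
qed

lemma connects_component:
  fixes c :: nat
  assumes "\<forall>e\<in>F. fst (ends C e) \<in> K \<and> snd (ends C e) \<in> K"
  defines "Kc \<equiv> {x\<in>K. (c, x) \<in> (adjrel C F)\<^sup>*}"
  shows "connects C {e\<in>F. fst (ends C e) \<in> Kc} Kc"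
proof -
  have closed: "\<forall>e\<in>F. fst (ends C e) \<in> Kc \<longleftrightarrow> snd (ends C e) \<in> Kc"
    using component_edge_closed[OF assms(1)] unfolding Kc_def by blast
  have "(x, y) \<in> (adjrel C {e\<in>F. fst (ends C e) \<in> Kc})\<^sup>*" if "x \<in> Kc" "y \<in> Kc" for x y
  proof -
    have "(c, x) \<in> (adjrel C F)\<^sup>*" "(c, y) \<in> (adjrel C F)\<^sup>*"
      using that unfolding Kc_def by auto
    then have "(x, y) \<in> (adjrel C F)\<^sup>*"
      by (metis rtrancl_adjrel_sym rtrancl_trans)
    then show ?thesis
      using rtrancl_adjrel_restrict[OF _ that(1) closed] by blast
  qed
  then show ?thesis
    using closed unfolding connects_def by auto
qed

lemma rtrancl_adjrel_Diff_edge: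
  assumes "ends C e = (a, b)" "(a, x) \<in> (adjrel C F)\<^sup>*"
  shows "(a, x) \<in> (adjrel C (F - {e}))\<^sup>* \<or> (b, x) \<in> (adjrel C (F - {e}))\<^sup>*"
  using assms(2)
proof (induction rule: rtrancl_induct)
  case base
  then show ?case by simp
next
  case (step y z)
  then obtain e' where e': "e' \<in> F" "ends C e' = (y, z) \<or> ends C e' = (z, y)"
    by (auto simp: adjrel_iff)
  show ?case
  proof (cases "e' = e")
    case True
    then show ?thesis using e' assms(1) by auto
  next
    case False
    then have "(y, z) \<in> adjrel C (F - {e})"
      using e' by (auto simp: adjrel_iff)
    then show ?thesis
      using step.IH by (meson rtrancl.rtrancl_into_rtrancl)
  qed
qed

lemma connects_Diff_edge:
  assumes "connects C F K" "e \<in> F" "ends C e = (a, b)" "(a, b) \<in> (adjrel C (F - {e}))\<^sup>*"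
  shows "connects C (F - {e}) K"
proof -
  have "a \<in> K"
    using assms(1-3) unfolding connects_def by (metis fst_conv)
  have "(a, x) \<in> (adjrel C (F - {e}))\<^sup>*" if "x \<in> K" for x
  proof -
    have "(a, x) \<in> (adjrel C F)\<^sup>*"
      using assms(1) \<open>a \<in> K\<close> that unfolding connects_def by blast
    then show ?thesis
      using rtrancl_adjrel_Diff_edge[OF assms(3)] assms(4) by (meson rtrancl_trans)
  qed
  then show ?thesis
    using assms(1) unfolding connects_def by (meson DiffD1 rtrancl_adjrel_sym rtrancl_trans)
qed

lemma connects_split_at_edge:
  assumes "connects C F K" "e \<in> F" "ends C e = (a, b)" "(a, b) \<notin> (adjrel C (F - {e}))\<^sup>*"
  obtains Ka Kb Fa Fb where "K = Ka \<union> Kb" "Ka \<inter> Kb = {}" "F - {e} = Fa \<union> Fb" "Fa \<inter> Fb = {}"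
    "Ka \<noteq> {}" "Kb \<noteq> {}" "connects C Fa Ka" "connects C Fb Kb"
proof -
  let ?F' = "F - {e}"
  have ends_F': "\<forall>e\<in>?F'. fst (ends C e) \<in> K \<and> snd (ends C e) \<in> K"
    using assms(1) unfolding connects_def by blast
  have ab: "a \<in> K" "b \<in> K"
    using assms(1-3) unfolding connects_def by (metis fst_conv snd_conv)+
  have reach: "(a, x) \<in> (adjrel C ?F')\<^sup>* \<or> (b, x) \<in> (adjrel C ?F')\<^sup>*" if "x \<in> K" for x
    using rtrancl_adjrel_Diff_edge[OF assms(3)] assms(1) ab that unfolding connects_def by blast
  define Ka where "Ka = {x\<in>K. (a, x) \<in> (adjrel C ?F')\<^sup>*}"
  define Kb where "Kb = {x\<in>K. (b, x) \<in> (adjrel C ?F')\<^sup>*}"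
  have disj: "Ka \<inter> Kb = {}"
  proof (rule ccontr)
    assume "Ka \<inter> Kb \<noteq> {}"
    then obtain x where "(a, x) \<in> (adjrel C ?F')\<^sup>*" "(b, x) \<in> (adjrel C ?F')\<^sup>*"
      unfolding Ka_def Kb_def by blast
    then have "(a, b) \<in> (adjrel C ?F')\<^sup>*"
      by (metis rtrancl_adjrel_sym rtrancl_trans)
    with assms(4) show False ..
  qed
  have KU: "K = Ka \<union> Kb"
    using reach unfolding Ka_def Kb_def by auto
  show thesis
  proof (rule that[OF KU disj])
    show "?F' = {e\<in>?F'. fst (ends C e) \<in> Ka} \<union> {e\<in>?F'. fst (ends C e) \<in> Kb}"
      "{e\<in>?F'. fst (ends C e) \<in> Ka} \<inter> {e\<in>?F'. fst (ends C e) \<in> Kb} = {}"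
      using KU disj ends_F' by auto
    show "Ka \<noteq> {}" "Kb \<noteq> {}"
      using ab unfolding Ka_def Kb_def by auto
    show "connects C {e\<in>?F'. fst (ends C e) \<in> Ka} Ka" "connects C {e\<in>?F'. fst (ends C e) \<in> Kb} Kb"
      unfolding Ka_def Kb_def by (rule connects_component[OF ends_F'])+
  qed
qed

lemma card_le_Suc_card_edges:
  assumes "finite F" "finite K" "K \<noteq> {}" "connects C F K"
  shows "card K \<le> card F + 1"
  using assms
proof (induction "card F" arbitrary: F K rule: less_induct)
  case less
  show ?case
  proof (cases "F = {}")
    case True
    then have "card K \<le> 1"
      using less.prems(2,4) unfolding connects_def adjrel_def by (simp add: card_le_Suc0_iff_eq)
    then show ?thesis by simp
  next
    case False
    then obtain e a b where e: "e \<in> F" "ends C e = (a, b)"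
      by (metis ex_in_conv surj_pair)
    have fin: "finite (F - {e})"
      using less.prems(1) by simp
    have card: "card F = Suc (card (F - {e}))"
      using e less.prems(1) by (metis card_Suc_Diff1)
    show ?thesis
    proof (cases "(a, b) \<in> (adjrel C (F - {e}))\<^sup>*")
      case True
      then show ?thesis
        using less.hyps[of "F - {e}" K] connects_Diff_edge[OF less.prems(4) e True] less.prems(2,3) fin card
        by simp
    next
      case False
      then obtain Ka Kb Fa Fb where split: "K = Ka \<union> Kb" "Ka \<inter> Kb = {}" "F - {e} = Fa \<union> Fb"
        "Fa \<inter> Fb = {}" "Ka \<noteq> {}" "Kb \<noteq> {}" "connects C Fa Ka" "connects C Fb Kb"
        using connects_split_at_edge[OF less.prems(4) e] by blast
      have finite: "finite Fa" "finite Fb" "finite Ka" "finite Kb"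
        using fin less.prems(2) split(1,3) by auto
      then have "card (F - {e}) = card Fa + card Fb" "card K = card Ka + card Kb"
        using split(1-4) by (simp_all add: card_Un_disjoint)
      moreover have "card Ka \<le> card Fa + 1" "card Kb \<le> card Fb + 1"
        using less.hyps[of Fa Ka] less.hyps[of Fb Kb] finite split(5-8) card calculation(1) by simp_all
      ultimately show ?thesis
        using card by simp
    qed
  qed
qed

section \<open>Edge contraction\<close>

lemma sum_fibers:
  assumes "finite S" "finite T"
  shows "(\<Sum>y\<in>T. \<Sum>x\<in>{x\<in>S. g x = y}. h x) = (\<Sum>x\<in>{x\<in>S. g x \<in> T}. h x)"
proof -
  have "(\<Sum>y\<in>T. \<Sum>x\<in>{x\<in>{x\<in>S. g x \<in> T}. g x = y}. h x) = (\<Sum>x\<in>{x\<in>S. g x \<in> T}. h x)"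
    using assms by (intro sum.group) auto
  moreover have "{x\<in>{x\<in>S. g x \<in> T}. g x = y} = {x\<in>S. g x = y}" if "y \<in> T" for y
    using that by auto
  ultimately show ?thesis
    by simp
qed

lemma card_fibers:
  assumes "finite S" "finite T"
  shows "(\<Sum>y\<in>T. card {x\<in>S. g x = y}) = card {x\<in>S. g x \<in> T}"
  using sum_fibers[OF assms, where h="\<lambda>_. 1::nat"] by simp

lemma wf_graph_ends:
  "wf_graph n G \<Longrightarrow> e \<in> edges G \<Longrightarrow> fst (ends G e) \<in> verts G \<and> snd (ends G e) \<in> verts G"
  unfolding wf_graph_def by blast

lemma zrep_in_verts:
  assumes "finite (verts C)" "v \<in> verts C"
  shows "zrep C Z v \<in> verts C" "(v, zrep C Z v) \<in> (adjrel C Z)\<^sup>*"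
proof -
  have "Min {u\<in>verts C. (v, u) \<in> (adjrel C Z)\<^sup>*} \<in> {u\<in>verts C. (v, u) \<in> (adjrel C Z)\<^sup>*}"
    using assms by (intro Min_in) auto
  then show "zrep C Z v \<in> verts C" "(v, zrep C Z v) \<in> (adjrel C Z)\<^sup>*"
    unfolding zrep_def by auto
qed

lemma zrep_le:
  assumes "finite (verts C)" "u \<in> verts C" "(v, u) \<in> (adjrel C Z)\<^sup>*"
  shows "zrep C Z v \<le> u"
  unfolding zrep_def using assms by (intro Min_le) auto

lemma zrep_eq:
  assumes "(v, w) \<in> (adjrel C Z)\<^sup>*"
  shows "zrep C Z v = zrep C Z w"
proof -
  have "(v, u) \<in> (adjrel C Z)\<^sup>* \<longleftrightarrow> (w, u) \<in> (adjrel C Z)\<^sup>*" for u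
    using assms by (meson rtrancl_adjrel_sym rtrancl_trans)
  then show ?thesis
    unfolding zrep_def by simp
qed

lemma zrep_eq_iff:
  assumes "finite (verts C)" "v \<in> verts C" "w \<in> verts C"
  shows "zrep C Z v = zrep C Z w \<longleftrightarrow> (v, w) \<in> (adjrel C Z)\<^sup>*"
proof
  assume "zrep C Z v = zrep C Z w"
  moreover have "(v, zrep C Z v) \<in> (adjrel C Z)\<^sup>*" "(w, zrep C Z w) \<in> (adjrel C Z)\<^sup>*"
    using zrep_in_verts(2) assms by blast+
  ultimately show "(v, w) \<in> (adjrel C Z)\<^sup>*"
    using rtrancl_adjrel_sym rtrancl_trans by metis
qed (rule zrep_eq)

lemma zrep_ends_eq: "e \<in> Z \<Longrightarrow> zrep C Z (fst (ends C e)) = zrep C Z (snd (ends C e))"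
  by (metis edge_in_adjrel prod.collapse r_into_rtrancl zrep_eq)

lemma card_zrep_fiber_le:
  assumes "finite (verts C)" "finite Z" "\<forall>e\<in>Z. fst (ends C e) \<in> verts C \<and> snd (ends C e) \<in> verts C"
  shows "card {v\<in>verts C. zrep C Z v = u} \<le> card {e\<in>Z. zrep C Z (fst (ends C e)) = u} + 1"
proof (cases "u \<in> zrep C Z ` verts C")
  case False
  then have "{v\<in>verts C. zrep C Z v = u} = {}"
    by blast
  then show ?thesis
    by (metis card.empty zero_le)
next
  case True
  then obtain v0 where v0: "v0 \<in> verts C" "u = zrep C Z v0"
    by blast
  have u: "u \<in> verts C" "zrep C Z u = u"
    using zrep_in_verts[OF assms(1) v0(1)] zrep_eq[OF rtrancl_adjrel_sym] unfolding v0(2) by blast+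
  define K where "K = {v\<in>verts C. (u, v) \<in> (adjrel C Z)\<^sup>*}"
  have fiber_iff: "zrep C Z v = u \<longleftrightarrow> (u, v) \<in> (adjrel C Z)\<^sup>*" if "v \<in> verts C" for v
  proof -
    have "zrep C Z v = u \<longleftrightarrow> (v, u) \<in> (adjrel C Z)\<^sup>*"
      using zrep_eq_iff[OF assms(1) that u(1), where Z=Z] u(2) by simp
    then show ?thesis
      using rtrancl_adjrel_sym by metis
  qed
  have fiber: "{v\<in>verts C. zrep C Z v = u} = K"
    unfolding K_def using fiber_iff by blast
  have "{e\<in>Z. fst (ends C e) \<in> K} = {e\<in>Z. zrep C Z (fst (ends C e)) = u}"
    using assms(3) fiber_iff unfolding K_def by blast
  then have "connects C {e\<in>Z. zrep C Z (fst (ends C e)) = u} K"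
    using connects_component[OF assms(3), of u] unfolding K_def by simp
  moreover have "K \<noteq> {}"
    using u(1) unfolding K_def by blast
  moreover have "finite K"
    using assms(1) unfolding K_def by simp
  ultimately show ?thesis
    using card_le_Suc_card_edges[of "{e\<in>Z. zrep C Z (fst (ends C e)) = u}" K C] assms(2)
    unfolding fiber by simp
qed

lemma contract_simps [simp]:
  "verts (contract G Z) = zrep G Z ` verts G"
  "edges (contract G Z) = edges G - Z"
  "ends (contract G Z) e = map_prod (zrep G Z) (zrep G Z) (ends G e)"
  "leg (contract G Z) i = zrep G Z (leg G i)"
  "len (contract G Z) = len G"
  by (simp_all add: contract_def)

lemma contract_wt:
  assumes "wf_graph n G" "Z \<subseteq> edges G"
  shows "int (wt (contract G Z) u) - 1 =
     (\<Sum>v\<in>{v\<in>verts G. zrep G Z v = u}. int (wt G v) - 1) + int (card {e\<in>Z. zrep G Z (fst (ends G e)) = u})"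
proof -
  have "finite (verts G)" "finite Z"
    using assms finite_subset unfolding wf_graph_def by auto
  moreover have "\<forall>e\<in>Z. fst (ends G e) \<in> verts G \<and> snd (ends G e) \<in> verts G"
    using assms wf_graph_ends by blast
  ultimately have "card {v\<in>verts G. zrep G Z v = u} \<le> card {e\<in>Z. zrep G Z (fst (ends G e)) = u} + 1"
    by (rule card_zrep_fiber_le)
  then have "int (wt (contract G Z) u) = int (\<Sum>v\<in>{v\<in>verts G. zrep G Z v = u}. wt G v)
     + int (card {e\<in>Z. zrep G Z (fst (ends G e)) = u}) + 1 - int (card {v\<in>verts G. zrep G Z v = u})"
    unfolding contract_def by (simp add: of_nat_diff)
  then show ?thesis
    by (simp add: sum_subtractf)
qed

lemma sum_contract_wt:
  assumes "wf_graph n G" "Z \<subseteq> edges G" "finite T"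
  shows "(\<Sum>u\<in>T. int (wt (contract G Z) u) - 1) =
     (\<Sum>v\<in>{v\<in>verts G. zrep G Z v \<in> T}. int (wt G v) - 1) + int (card {e\<in>Z. zrep G Z (fst (ends G e)) \<in> T})"
proof -
  have fin: "finite (verts G)" "finite Z"
    using assms unfolding wf_graph_def by (auto intro: finite_subset)
  have "(\<Sum>u\<in>T. int (wt (contract G Z) u) - 1)
      = (\<Sum>u\<in>T. \<Sum>v\<in>{v\<in>verts G. zrep G Z v = u}. int (wt G v) - 1)
        + int (\<Sum>u\<in>T. card {e\<in>Z. zrep G Z (fst (ends G e)) = u})"
    using contract_wt[OF assms(1,2)] by (simp add: sum.distrib)
  also have "\<dots> = (\<Sum>v\<in>{v\<in>verts G. zrep G Z v \<in> T}. int (wt G v) - 1)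
      + int (card {e\<in>Z. zrep G Z (fst (ends G e)) \<in> T})"
    using fin assms(3) by (simp add: sum_fibers card_fibers)
  finally show ?thesis .
qed

lemma genus_eq_sum:
  "finite (verts C) \<Longrightarrow> genus C = int (card (edges C)) + 1 + (\<Sum>v\<in>verts C. int (wt C v) - 1)"
  by (simp add: genus_def sum_subtractf)

lemma contract_genus:
  assumes "wf_graph n G" "Z \<subseteq> edges G"
  shows "genus (contract G Z) = genus G"
proof -
  let ?r = "zrep G Z" and ?V = "verts G"
  have fin: "finite ?V" "finite (edges G)"
    using assms unfolding wf_graph_def by auto
  have "{v\<in>?V. ?r v \<in> ?r ` ?V} = ?V" "{e\<in>Z. ?r (fst (ends G e)) \<in> ?r ` ?V} = Z"
    using assms wf_graph_ends by auto
  then have "(\<Sum>u\<in>?r ` ?V. int (wt (contract G Z) u) - 1) = (\<Sum>v\<in>?V. int (wt G v) - 1) + int (card Z)"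
    using sum_contract_wt[OF assms, of "?r ` ?V"] fin by simp
  then show ?thesis
    using fin assms(2) by (simp add: genus_eq_sum card_Diff_subset card_mono of_nat_diff finite_subset)
qed

lemma rtrancl_adjrel_contract:
  assumes "Y \<inter> W = {}" "(v, u) \<in> (adjrel G (Y \<union> W))\<^sup>*"
  shows "(zrep G Y v, zrep G Y u) \<in> (adjrel (contract G Y) W)\<^sup>*"
  using assms(2)
proof (induction rule: rtrancl_induct)
  case base
  then show ?case by simp
next
  case (step y z)
  then obtain e where e: "e \<in> Y \<union> W" "ends G e = (y, z) \<or> ends G e = (z, y)"
    by (auto simp: adjrel_iff)
  show ?case
  proof (cases "e \<in> Y")
    case True
    then have "(y, z) \<in> adjrel G Y"
      using e(2) by (auto simp: adjrel_iff)
    then have "zrep G Y y = zrep G Y z"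
      by (intro zrep_eq) simp
    then show ?thesis
      using step.IH by simp
  next
    case False
    then have "(zrep G Y y, zrep G Y z) \<in> adjrel (contract G Y) W"
      using e unfolding adjrel_iff by (intro bexI[of _ e]) auto
    then show ?thesis
      by (rule rtrancl.rtrancl_into_rtrancl[OF step.IH])
  qed
qed

lemma contract_wf_graph:
  assumes "wf_graph n G" "Z \<subseteq> edges G"
  shows "wf_graph n (contract G Z)"
proof -
  have "(zrep G Z x, zrep G Z y) \<in> (adjrel (contract G Z) (edges G - Z))\<^sup>*"
    if "x \<in> verts G" "y \<in> verts G" for x y
  proof -
    have "(x, y) \<in> (adjrel G (Z \<union> (edges G - Z)))\<^sup>*"
      using assms that unfolding wf_graph_def by (simp add: Un_absorb1)
    then show ?thesis
      by (rule rtrancl_adjrel_contract[rotated]) blast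
  qed
  then show ?thesis
    using assms unfolding wf_graph_def by auto
qed

lemma sum_val_zrep_fiber:
  assumes "wf_graph n G" "Z \<subseteq> edges G"
  shows "(\<Sum>v\<in>{v\<in>verts G. zrep G Z v = u}. val G v)
    = val (contract G Z) u + 2 * card {e\<in>Z. zrep G Z (fst (ends G e)) = u}"
proof -
  let ?r = "zrep G Z" and ?K = "{v\<in>verts G. zrep G Z v = u}" and ?E = "edges G"
  have fin: "finite (verts G)" "finite ?E"
    using assms(1) unfolding wf_graph_def by auto
  have ends: "\<forall>e\<in>?E. fst (ends G e) \<in> verts G \<and> snd (ends G e) \<in> verts G"
    using assms(1) wf_graph_ends by blast
  have split: "card {e\<in>?E. P e} = card {e\<in>?E - Z. P e} + card {e\<in>Z. P e}" for P
  proof -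
    have "{e\<in>?E. P e} = {e\<in>?E - Z. P e} \<union> {e\<in>Z. P e}" "{e\<in>?E - Z. P e} \<inter> {e\<in>Z. P e} = {}"
      using assms(2) by auto
    moreover have "finite {e\<in>?E - Z. P e}" "finite {e\<in>Z. P e}"
      using fin(2) finite_subset[OF assms(2)] by auto
    ultimately show ?thesis
      by (metis card_Un_disjoint)
  qed
  have fiber_card: "(\<Sum>v\<in>?K. card {e\<in>?E. end_of e = v}) = card {e\<in>?E. ?r (end_of e) = u}"
    if "\<forall>e\<in>?E. end_of e \<in> verts G" for end_of
  proof -
    have "(\<Sum>v\<in>?K. card {e\<in>?E. end_of e = v}) = card {e\<in>?E. end_of e \<in> ?K}"
      using fin by (intro card_fibers) auto
    also have "{e\<in>?E. end_of e \<in> ?K} = {e\<in>?E. ?r (end_of e) = u}"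
      using that by auto
    finally show ?thesis .
  qed
  have "(\<Sum>v\<in>?K. card {e\<in>?E. fst (ends G e) = v}) = card {e\<in>?E. ?r (fst (ends G e)) = u}"
    "(\<Sum>v\<in>?K. card {e\<in>?E. snd (ends G e) = v}) = card {e\<in>?E. ?r (snd (ends G e)) = u}"
    using fiber_card[of "\<lambda>e. fst (ends G e)"] fiber_card[of "\<lambda>e. snd (ends G e)"] ends by simp_all
  moreover have "{e\<in>Z. ?r (snd (ends G e)) = u} = {e\<in>Z. ?r (fst (ends G e)) = u}"
    using zrep_ends_eq[of _ Z G] by auto
  ultimately show ?thesis
    unfolding val_def sum.distrib
    using split[of "\<lambda>e. ?r (fst (ends G e)) = u"] split[of "\<lambda>e. ?r (snd (ends G e)) = u"] by simp
qed

lemma sum_legwt_zrep_fiber: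
  assumes "wf_graph n G"
  shows "(\<Sum>v\<in>{v\<in>verts G. zrep G Z v = u}. legwt n a G v) = legwt n a (contract G Z) u"
proof -
  let ?K = "{v\<in>verts G. zrep G Z v = u}"
  have "finite ?K"
    using assms unfolding wf_graph_def by auto
  then have "(\<Sum>v\<in>?K. legwt n a G v) = (\<Sum>i\<in>{i\<in>{1..n}. leg G i \<in> ?K}. a i)"
    unfolding legwt_def by (intro sum_fibers) auto
  also have "{i\<in>{1..n}. leg G i \<in> ?K} = {i\<in>{1..n}. leg (contract G Z) i = u}"
    using assms unfolding wf_graph_def by auto
  finally show ?thesis
    unfolding legwt_def .
qed

lemma contract_stable_graph:
  assumes "stable_graph g n a G" "Z \<subseteq> edges G"
  shows "stable_graph g n a (contract G Z)"
proof -
  have wf: "wf_graph n G"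
    using assms(1) unfolding stable_graph_def by blast
  have "2 * real (wt (contract G Z) u) - 2 + real (val (contract G Z) u) + legwt n a (contract G Z) u > 0"
    if u: "u \<in> verts (contract G Z)" for u
  proof -
    let ?K = "{v\<in>verts G. zrep G Z v = u}" and ?F = "{e\<in>Z. zrep G Z (fst (ends G e)) = u}"
    have "finite ?K" "?K \<noteq> {}"
      using wf u unfolding wf_graph_def by auto
    then have "0 < (\<Sum>v\<in>?K. 2 * real (wt G v) - 2 + real (val G v) + legwt n a G v)"
      using assms(1) unfolding stable_graph_def by (intro sum_pos) auto
    also have "\<dots> = 2 * (\<Sum>v\<in>?K. real (wt G v) - 1) + real (\<Sum>v\<in>?K. val G v) + (\<Sum>v\<in>?K. legwt n a G v)"
      by (simp add: sum.distrib sum_subtractf sum_distrib_left)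
    also have "\<dots> = 2 * (real (wt (contract G Z) u) - 1 - real (card ?F))
        + real (val (contract G Z) u + 2 * card ?F) + legwt n a (contract G Z) u"
    proof -
      have "real (wt (contract G Z) u) - 1 = (\<Sum>v\<in>?K. real (wt G v) - 1) + real (card ?F)"
        using arg_cong[where f=real_of_int, OF contract_wt[OF wf assms(2), of u]] by simp
      then show ?thesis
        using sum_val_zrep_fiber[OF wf assms(2), of u] sum_legwt_zrep_fiber[OF wf, where Z=Z and u=u and a=a] by simp
    qed
    finally show ?thesis
      by simp
  qed
  then show ?thesis
    using assms contract_wf_graph[OF wf assms(2)] contract_genus[OF wf assms(2)]
    unfolding stable_graph_def by simp
qed

lemma rtrancl_adjrel_contract_lift:
  assumes wf: "wf_graph n G" and W: "W \<subseteq> edges G"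
    and "(zrep G Y v, x) \<in> (adjrel (contract G Y) W)\<^sup>*" "v \<in> verts G"
  shows "\<exists>u\<in>verts G. x = zrep G Y u \<and> (v, u) \<in> (adjrel G (Y \<union> W))\<^sup>*"
  using assms(3)
proof (induction rule: rtrancl_induct)
  case base
  then show ?case using assms(4) by blast
next
  case (step x x')
  then obtain u where u: "u \<in> verts G" "x = zrep G Y u" "(v, u) \<in> (adjrel G (Y \<union> W))\<^sup>*"
    by blast
  obtain e where e: "e \<in> W" "ends (contract G Y) e = (x, x') \<or> ends (contract G Y) e = (x', x)"
    using step.hyps(2) by (auto simp: adjrel_iff)
  obtain a b where ab: "ends G e = (a, b)"
    by fastforce
  have ab_verts: "a \<in> verts G" "b \<in> verts G"
    using wf_graph_ends[OF wf, of e] e(1) W ab by auto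
  have adj: "(a, b) \<in> adjrel G (Y \<union> W)" "(b, a) \<in> adjrel G (Y \<union> W)"
    using e(1) ab unfolding adjrel_iff by blast+
  have reach: "(v, c) \<in> (adjrel G (Y \<union> W))\<^sup>*" if "c \<in> verts G" "zrep G Y c = x" for c
  proof -
    have "(u, c) \<in> (adjrel G Y)\<^sup>*"
      using zrep_eq_iff[OF _ u(1) that(1), where Z=Y] wf u(2) that(2) unfolding wf_graph_def by simp
    then have "(u, c) \<in> (adjrel G (Y \<union> W))\<^sup>*"
      by (rule rtrancl_adjrel_mono[rotated]) blast
    then show ?thesis
      using u(3) by (rule rtrancl_trans[rotated])
  qed
  from e(2) ab have "(x = zrep G Y a \<and> x' = zrep G Y b) \<or> (x = zrep G Y b \<and> x' = zrep G Y a)"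
    by auto
  then show ?case
    using reach ab_verts adj by (metis rtrancl.rtrancl_into_rtrancl)
qed

lemma Min_image_eq_Min:
  fixes f :: "'a::linorder \<Rightarrow> 'a"
  assumes "finite K" "K \<noteq> {}" "f ` K \<subseteq> K" "\<forall>x\<in>K. f x \<le> x"
  shows "Min (f ` K) = Min K"
proof -
  have "Min K \<le> Min (f ` K)"
    using assms(1-3) by (intro Min_antimono) auto
  moreover have "Min K \<in> K"
    using assms(1,2) by (rule Min_in)
  then have "Min (f ` K) \<le> f (Min K)" "f (Min K) \<le> Min K"
    using assms(1,4) by auto
  ultimately show ?thesis
    by simp
qed

lemma zrep_contract_contract:
  assumes wf: "wf_graph n G" and "Y \<inter> W = {}" "W \<subseteq> edges G" and v: "v \<in> verts G"
  shows "zrep (contract G Y) W (zrep G Y v) = zrep G (Y \<union> W) v"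
proof -
  have fin: "finite (verts G)"
    using wf unfolding wf_graph_def by blast
  define K where "K = {u\<in>verts G. (v, u) \<in> (adjrel G (Y \<union> W))\<^sup>*}"
  have image: "{x\<in>verts (contract G Y). (zrep G Y v, x) \<in> (adjrel (contract G Y) W)\<^sup>*} = zrep G Y ` K"
  proof (intro equalityI subsetI)
    fix x assume "x \<in> {x\<in>verts (contract G Y). (zrep G Y v, x) \<in> (adjrel (contract G Y) W)\<^sup>*}"
    then show "x \<in> zrep G Y ` K"
      using rtrancl_adjrel_contract_lift[OF wf assms(3) _ v] unfolding K_def by blast
  next
    fix x assume "x \<in> zrep G Y ` K"
    then show "x \<in> {x\<in>verts (contract G Y). (zrep G Y v, x) \<in> (adjrel (contract G Y) W)\<^sup>*}"
      using rtrancl_adjrel_contract[OF assms(2)] unfolding K_def by auto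
  qed
  have "zrep G Y ` K \<subseteq> K"
  proof
    fix x assume "x \<in> zrep G Y ` K"
    then obtain u where u: "u \<in> verts G" "(v, u) \<in> (adjrel G (Y \<union> W))\<^sup>*" "x = zrep G Y u"
      unfolding K_def by blast
    have "(u, zrep G Y u) \<in> (adjrel G (Y \<union> W))\<^sup>*"
      using zrep_in_verts(2)[OF fin u(1)] by (rule rtrancl_adjrel_mono[rotated]) blast
    then show "x \<in> K"
      using u zrep_in_verts(1)[OF fin u(1)] rtrancl_trans unfolding K_def by fastforce
  qed
  moreover have "finite K" "K \<noteq> {}" "\<forall>x\<in>K. zrep G Y x \<le> x"
    using fin v zrep_le[OF fin] unfolding K_def by auto
  ultimately have "Min (zrep G Y ` K) = Min K"
    using Min_image_eq_Min by blast
  then show ?thesis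
    unfolding zrep_def[of "contract G Y"] image unfolding zrep_def K_def by simp
qed

lemma wt_contract_contract:
  assumes wf: "wf_graph n G" and Y: "Y \<subseteq> edges G" and W: "W \<subseteq> edges G - Y"
  shows "wt (contract (contract G Y) W) u = wt (contract G (Y \<union> W)) u"
proof -
  let ?G1 = "contract G Y" and ?r1 = "zrep G Y" and ?r2 = "zrep G (Y \<union> W)" and ?V = "verts G"
  let ?K = "{y\<in>verts ?G1. zrep ?G1 W y = u}" and ?at_u = "\<lambda>Z. {e\<in>Z. ?r2 (fst (ends G e)) = u}"
  have fin: "finite (edges G)" "finite ?K" "finite W"
    using wf W unfolding wf_graph_def by (auto intro: finite_subset)
  have ends: "\<forall>e\<in>edges G. fst (ends G e) \<in> ?V"
    using wf_graph_ends[OF wf] by blast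
  have r2: "zrep ?G1 W (?r1 v) = ?r2 v" if "v \<in> ?V" for v
    using zrep_contract_contract[OF wf _ _ that] W by blast
  have in_K: "?r1 v \<in> ?K \<longleftrightarrow> ?r2 v = u" if "v \<in> ?V" for v
    using that r2 by auto
  have "{v\<in>?V. ?r1 v \<in> ?K} = {v\<in>?V. ?r2 v = u}" "{e\<in>Y. ?r1 (fst (ends G e)) \<in> ?K} = ?at_u Y"
    using in_K ends Y by auto
  moreover have "{e\<in>W. zrep ?G1 W (fst (ends ?G1 e)) = u} = ?at_u W"
    using r2 ends W by auto
  ultimately have "int (wt (contract ?G1 W) u) - 1
      = (\<Sum>v\<in>{v\<in>?V. ?r2 v = u}. int (wt G v) - 1) + int (card (?at_u Y)) + int (card (?at_u W))"
    using contract_wt[OF contract_wf_graph[OF wf Y], of W u] sum_contract_wt[OF wf Y fin(2)] W by simp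
  also have "\<dots> = int (wt (contract G (Y \<union> W)) u) - 1"
  proof -
    have "card (?at_u (Y \<union> W)) = card (?at_u Y) + card (?at_u W)"
      using fin Y W by (subst card_Un_disjoint[symmetric]) (auto intro: arg_cong[where f=card] finite_subset)
    moreover have "Y \<union> W \<subseteq> edges G"
      using Y W by blast
    ultimately show ?thesis
      using contract_wt[OF wf, of "Y \<union> W" u] by simp
  qed
  finally show ?thesis
    by simp
qed

definition iso_via :: "nat \<Rightarrow> (nat \<Rightarrow> nat) \<Rightarrow> (nat \<Rightarrow> nat) \<Rightarrow> tcurve \<Rightarrow> tcurve \<Rightarrow> bool" where
  "iso_via n f h C D \<longleftrightarrow> bij_betw f (verts C) (verts D) \<and> bij_betw h (edges C) (edges D)
     \<and> (\<forall>v\<in>verts C. wt D (f v) = wt C v)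
     \<and> (\<forall>i\<in>{1..n}. leg D i = f (leg C i))
     \<and> (\<forall>e\<in>edges C. len D (h e) = len C e
          \<and> (ends D (h e) = map_prod f f (ends C e) \<or> ends D (h e) = prod.swap (map_prod f f (ends C e))))"

lemma curve_iso_iff_iso_via: "curve_iso n C D \<longleftrightarrow> (\<exists>f h. iso_via n f h C D)"
  unfolding curve_iso_def iso_via_def ..

lemma iso_via_id:
  assumes "verts C = verts D" "edges C = edges D" "\<forall>v\<in>verts C. wt C v = wt D v"
    "\<forall>i\<in>{1..n}. leg C i = leg D i" "\<forall>e\<in>edges C. ends C e = ends D e \<and> len C e = len D e"
  shows "iso_via n id id C D"
  using assms unfolding iso_via_def by (simp add: map_prod.id)

lemma iso_via_comp:
  assumes "iso_via n f h C D" "iso_via n f' h' D X"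
  shows "iso_via n (f' \<circ> f) (h' \<circ> h) C X"
proof -
  have f: "f v \<in> verts D" if "v \<in> verts C" for v
    using assms(1) that bij_betwE unfolding iso_via_def by blast
  have h: "h e \<in> edges D" if "e \<in> edges C" for e
    using assms(1) that bij_betwE unfolding iso_via_def by blast
  have "ends X (h' (h e)) = map_prod (f' \<circ> f) (f' \<circ> f) (ends C e)
      \<or> ends X (h' (h e)) = prod.swap (map_prod (f' \<circ> f) (f' \<circ> f) (ends C e))" if "e \<in> edges C" for e
    using assms h[OF that] that unfolding iso_via_def
    by (cases "ends C e") (metis map_prod_simp swap_simp comp_apply)
  then show ?thesis
    using assms f h unfolding iso_via_def by (auto intro: bij_betw_trans)
qed

lemma curve_iso_refl: "curve_iso n C C"
  unfolding curve_iso_iff_iso_via using iso_via_id by blast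

lemma curve_iso_trans: "curve_iso n C D \<Longrightarrow> curve_iso n D X \<Longrightarrow> curve_iso n C X"
  unfolding curve_iso_iff_iso_via using iso_via_comp by blast

lemma iso_class_eq_if_same_data:
  assumes "verts C = verts D" "edges C = edges D" "\<forall>v\<in>verts C. wt C v = wt D v"
    "\<forall>i\<in>{1..n}. leg C i = leg D i" "\<forall>e\<in>edges C. ends C e = ends D e \<and> len C e = len D e"
  shows "iso_class n C = iso_class n D"
proof -
  have "iso_via n id id C D" "iso_via n id id D C"
    by (rule iso_via_id; use assms in auto)+
  then have "curve_iso n C D" "curve_iso n D C"
    unfolding curve_iso_iff_iso_via by blast+
  then show ?thesis
    unfolding iso_class_def using curve_iso_trans by blast
qed

lemma cone_map_contract:
  assumes wf: "wf_graph n G" and Y: "Y \<subseteq> edges G" and "\<forall>e\<in>Y. l e = 0"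
  shows "cone_map n (contract G Y) l = cone_map n G l"
proof -
  define W where "W = {e\<in>edges G - Y. l e = 0}"
  have W: "W \<subseteq> edges G - Y" "Y \<inter> W = {}" "W \<subseteq> edges G"
    unfolding W_def by auto
  have "{e\<in>edges (contract G Y). l e = 0} = W" "{e\<in>edges G. l e = 0} = Y \<union> W"
    unfolding W_def using assms(2,3) by auto
  moreover have r: "zrep (contract G Y) W (zrep G Y v) = zrep G (Y \<union> W) v" if "v \<in> verts G" for v
    using zrep_contract_contract[OF wf W(2,3) that] .
  moreover have "\<forall>i\<in>{1..n}. leg G i \<in> verts G" "\<forall>e\<in>edges G. fst (ends G e) \<in> verts G \<and> snd (ends G e) \<in> verts G"
    using wf wf_graph_ends unfolding wf_graph_def by blast+
  ultimately show ?thesis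
    unfolding cone_map_def using wt_contract_contract[OF wf Y W(1)]
    by (intro iso_class_eq_if_same_data) (auto simp: image_image map_prod_def split: prod.splits)
qed

lemma iso_via_wf_graph:
  assumes wf: "wf_graph n C" and iso: "iso_via n f h C X"
  shows "wf_graph n X"
proof -
  have V: "verts X = f ` verts C" and E: "edges X = h ` edges C"
    using iso unfolding iso_via_def bij_betw_def by auto
  have ends: "{fst (ends X (h e)), snd (ends X (h e))} = {f (fst (ends C e)), f (snd (ends C e))}"
    if "e \<in> edges C" for e
    using iso that unfolding iso_via_def by (cases "ends C e") auto
  have "(f x, f y) \<in> (adjrel X (edges X))\<^sup>*" if "(x, y) \<in> (adjrel C (edges C))\<^sup>*" for x y
    using that
  proof (induction rule: rtrancl_induct)
    case (step y z)
    then obtain e where "e \<in> edges C" "ends C e = (y, z) \<or> ends C e = (z, y)"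
      by (auto simp: adjrel_iff)
    then have "(f y, f z) \<in> adjrel X (edges X)"
      using ends[of e] E unfolding adjrel_iff
      by (intro bexI[of _ "h e"]) (auto simp: doubleton_eq_iff prod_eq_iff)
    then show ?case
      by (rule rtrancl.rtrancl_into_rtrancl[OF step.IH])
  qed simp
  then show ?thesis
    using wf iso V E ends unfolding wf_graph_def iso_via_def by (auto simp: doubleton_eq_iff)
qed

lemma genus_iso_via:
  assumes "iso_via n f h C X"
  shows "genus X = genus C"
proof -
  have "(\<Sum>v\<in>verts X. wt X v) = (\<Sum>v\<in>verts C. wt C v)"
    using assms sum.reindex_bij_betw[of f "verts C" "verts X" "wt X"] unfolding iso_via_def by simp
  moreover have "card (verts X) = card (verts C)" "card (edges X) = card (edges C)"
    using assms unfolding iso_via_def by (metis bij_betw_same_card)+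
  ultimately show ?thesis
    unfolding genus_def by simp
qed

lemma val_eq_sum:
  "finite (edges C) \<Longrightarrow>
    val C v = (\<Sum>e\<in>edges C. of_bool (fst (ends C e) = v) + of_bool (snd (ends C e) = v))"
  unfolding val_def by (simp add: sum.distrib Collect_conj_eq Int_commute sum.If_cases)

lemma val_iso_via:
  assumes wf: "wf_graph n C" and iso: "iso_via n f h C X" and v: "v \<in> verts C"
  shows "val X (f v) = val C v"
proof -
  have inj: "inj_on f (verts C)" and hE: "bij_betw h (edges C) (edges X)"
    using iso unfolding iso_via_def bij_betw_def by auto
  have "of_bool (fst (ends X (h e)) = f v) + of_bool (snd (ends X (h e)) = f v)
      = of_bool (fst (ends C e) = v) + (of_bool (snd (ends C e) = v) :: nat)" if "e \<in> edges C" for e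
  proof -
    have "f (fst (ends C e)) = f v \<longleftrightarrow> fst (ends C e) = v" "f (snd (ends C e)) = f v \<longleftrightarrow> snd (ends C e) = v"
      using inj v wf_graph_ends[OF wf that] by (auto dest: inj_onD)
    then show ?thesis
      using iso that unfolding iso_via_def by (cases "ends C e") auto
  qed
  then have "(\<Sum>e\<in>edges C. of_bool (fst (ends X (h e)) = f v) + of_bool (snd (ends X (h e)) = f v))
      = (\<Sum>e\<in>edges C. of_bool (fst (ends C e) = v) + (of_bool (snd (ends C e) = v) :: nat))"
    by (rule sum.cong[OF refl])
  then have "(\<Sum>e\<in>edges X. of_bool (fst (ends X e) = f v) + of_bool (snd (ends X e) = f v))
      = (\<Sum>e\<in>edges C. of_bool (fst (ends C e) = v) + (of_bool (snd (ends C e) = v) :: nat))"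
    using sum.reindex_bij_betw[OF hE, of "\<lambda>e. of_bool (fst (ends X e) = f v) + (of_bool (snd (ends X e) = f v) :: nat)"]
    by simp
  moreover have "finite (edges C)" "finite (edges X)"
    using wf hE bij_betw_finite unfolding wf_graph_def by auto
  ultimately show ?thesis
    by (simp add: val_eq_sum)
qed

lemma legwt_iso_via:
  assumes wf: "wf_graph n C" and iso: "iso_via n f h C X" and v: "v \<in> verts C"
  shows "legwt n a X (f v) = legwt n a C v"
proof -
  have inj: "inj_on f (verts C)" and legs: "\<forall>i\<in>{1..n}. leg X i = f (leg C i) \<and> leg C i \<in> verts C"
    using wf iso unfolding iso_via_def bij_betw_def wf_graph_def by auto
  have "{i\<in>{1..n}. leg X i = f v} = {i\<in>{1..n}. leg C i = v}"
    using legs inj_onD[OF inj _ _ v] by auto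
  then show ?thesis
    unfolding legwt_def by simp
qed

lemma stable_graph_iso:
  assumes "stable_graph g n a C" "curve_iso n C X"
  shows "stable_graph g n a X"
proof -
  obtain f h where iso: "iso_via n f h C X"
    using assms(2) unfolding curve_iso_iff_iso_via by blast
  have wf: "wf_graph n C"
    using assms(1) unfolding stable_graph_def by blast
  have "verts X = f ` verts C"
    using iso unfolding iso_via_def bij_betw_def by blast
  then show ?thesis
    using assms(1) iso iso_via_wf_graph[OF wf iso] genus_iso_via[OF iso] val_iso_via[OF wf iso]
      legwt_iso_via[OF wf iso] unfolding stable_graph_def iso_via_def by auto
qed

lemma total_len_iso:
  assumes "curve_iso n C X"
  shows "total_len X = total_len C"
proof -
  obtain f h where "iso_via n f h C X"
    using assms unfolding curve_iso_iff_iso_via by blast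
  then show ?thesis
    unfolding total_len_def iso_via_def using sum.reindex_bij_betw[of h "edges C" "edges X" "len X"] by auto
qed

section \<open>Moduli spaces defined by a system of cones\<close>

lemma stable_graph_len_update [simp]: "stable_graph g n a (C\<lparr>len := l\<rparr>) = stable_graph g n a C"
  by (simp add: stable_graph_def wf_graph_def adjrel_def genus_def val_def legwt_def)

lemma stable_graph_mono:
  assumes "stable_graph g n a G" "le_wt n a b"
  shows "stable_graph g n b G"
proof -
  have "0 < 2 * real (wt G v) - 2 + real (val G v) + legwt n b G v" if "v \<in> verts G" for v
  proof -
    have "legwt n a G v \<le> legwt n b G v"
      using assms(2) unfolding legwt_def le_wt_def by (intro sum_mono) auto
    moreover have "0 < 2 * real (wt G v) - 2 + real (val G v) + legwt n a G v"
      using assms(1) that unfolding stable_graph_def by blast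
    ultimately show ?thesis
      by linarith
  qed
  then show ?thesis
    using assms(1) unfolding stable_graph_def by blast
qed

lemma closedin_face:
  fixes S :: "(nat \<Rightarrow> ereal) set"
  shows "closedin (top_of_set S) {l \<in> S. \<forall>e\<in>Y. l e = 0}"
proof -
  have "closed {l :: nat \<Rightarrow> ereal. l e = 0}" for e
    by (intro closed_Collect_eq continuous_on_product_coordinates continuous_on_const)
  then have "closed (\<Inter>e\<in>Y. {l :: nat \<Rightarrow> ereal. l e = 0})"
    by blast
  moreover have "{l \<in> S. \<forall>e\<in>Y. l e = 0} = S \<inter> (\<Inter>e\<in>Y. {l. l e = 0})"
    by auto
  ultimately show ?thesis
    by (simp only: closedin_closed_Int)
qed

text \<open>The spaces with finite edge lengths and with edge lengths in (0, \<infinity>] differ only in the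
  admissible lengths of a point and in the cone attached to a graph.\<close>

locale tropical_moduli =
  fixes admissible :: "tcurve \<Rightarrow> bool"
    and cn :: "tcurve \<Rightarrow> (nat \<Rightarrow> ereal) set"
  assumes admissible_cone_point: "l \<in> cn G \<Longrightarrow> admissible ((contract G {e\<in>edges G. l e = 0})\<lparr>len := l\<rparr>)"
    and cn_contract: "Y \<subseteq> edges G \<Longrightarrow> cn (contract G Y) = {l\<in>cn G. \<forall>e\<in>Y. l e = 0}"
    and admissible_relabel: "admissible (relabel \<sigma> C) \<longleftrightarrow> admissible C"
    and cn_relabel: "cn (relabel \<sigma> G) = cn G"
begin

definition points :: "nat \<Rightarrow> nat \<Rightarrow> (nat \<Rightarrow> real) \<Rightarrow> tcurve set set" where
  "points g n a = {iso_class n C | C. stable_graph g n a C \<and> admissible C}"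

definition space :: "nat \<Rightarrow> nat \<Rightarrow> (nat \<Rightarrow> real) \<Rightarrow> tcurve set topology" where
  "space g n a = colim_top (points g n a) {G. stable_graph g n a G} cn (cone_map n)"

lemma cone_map_in_points:
  assumes "stable_graph g n a G" "l \<in> cn G"
  shows "cone_map n G l \<in> points g n a"
  using contract_stable_graph[OF assms(1), of "{e\<in>edges G. l e = 0}"] admissible_cone_point[OF assms(2)]
  unfolding points_def cone_map_def by auto

lemma topspace_space: "topspace (space g n a) = points g n a"
  unfolding space_def using cone_map_in_points by (intro topspace_colim_top) auto

lemma openin_space:
  "openin (space g n a) U \<longleftrightarrow> U \<subseteq> points g n a
     \<and> (\<forall>G. stable_graph g n a G \<longrightarrow> openin (top_of_set (cn G)) {l \<in> cn G. cone_map n G l \<in> U})"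
  unfolding space_def openin_colim_top by simp

lemma stable_graph_if_in_points:
  assumes "iso_class n X \<in> points g n a"
  shows "stable_graph g n a X"
proof -
  obtain C where "iso_class n X = iso_class n C" "stable_graph g n a C"
    using assms unfolding points_def by blast
  moreover have "X \<in> iso_class n X"
    unfolding iso_class_def by (simp add: curve_iso_refl)
  ultimately show ?thesis
    using stable_graph_iso unfolding iso_class_def by blast
qed

lemma points_mono: "le_wt n a b \<Longrightarrow> points g n a \<subseteq> points g n b"
  unfolding points_def using stable_graph_mono by blast

lemma cone_map_in_points_iff_face:
  assumes "stable_graph g n b G" "l \<in> cn G"
  shows "cone_map n G l \<in> points g n a \<longleftrightarrow>
    (\<exists>Y. Y \<subseteq> edges G \<and> stable_graph g n a (contract G Y) \<and> l \<in> cn (contract G Y))"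
proof
  let ?Y = "{e\<in>edges G. l e = 0}"
  assume "cone_map n G l \<in> points g n a"
  then have "stable_graph g n a ((contract G ?Y)\<lparr>len := l\<rparr>)"
    unfolding cone_map_def by (rule stable_graph_if_in_points)
  moreover have "l \<in> cn (contract G ?Y)"
    using cn_contract[of ?Y G] assms(2) by auto
  ultimately show "\<exists>Y. Y \<subseteq> edges G \<and> stable_graph g n a (contract G Y) \<and> l \<in> cn (contract G Y)"
    by (intro exI[of _ ?Y]) auto
next
  assume "\<exists>Y. Y \<subseteq> edges G \<and> stable_graph g n a (contract G Y) \<and> l \<in> cn (contract G Y)"
  then obtain Y where Y: "Y \<subseteq> edges G" "stable_graph g n a (contract G Y)" "l \<in> cn (contract G Y)"
    by blast
  have "wf_graph n G"
    using assms(1) unfolding stable_graph_def by blast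
  moreover have "\<forall>e\<in>Y. l e = 0"
    using cn_contract[OF Y(1)] Y(3) by blast
  ultimately have "cone_map n (contract G Y) l = cone_map n G l"
    using cone_map_contract Y(1) by blast
  then show "cone_map n G l \<in> points g n a"
    using cone_map_in_points[OF Y(2,3)] by simp
qed

lemma openin_space_Int_points:
  assumes "le_wt n a b" "openin (space g n b) T"
  shows "openin (space g n a) (T \<inter> points g n a)"
  unfolding openin_space
proof (intro conjI allI impI)
  fix G assume G: "stable_graph g n a G"
  then have "{l \<in> cn G. cone_map n G l \<in> T \<inter> points g n a} = {l \<in> cn G. cone_map n G l \<in> T}"
    using cone_map_in_points by blast
  then show "openin (top_of_set (cn G)) {l \<in> cn G. cone_map n G l \<in> T \<inter> points g n a}"
    using assms stable_graph_mono[OF G] unfolding openin_space by simp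
qed simp

lemma closedin_face_outside:
  assumes "openin (space g n a) U" "Y \<subseteq> edges G" "stable_graph g n a (contract G Y)"
  shows "closedin (top_of_set (cn G)) {l \<in> cn (contract G Y). cone_map n (contract G Y) l \<notin> U}"
proof -
  let ?face = "cn (contract G Y)"
  have "openin (top_of_set ?face) {l \<in> ?face. cone_map n (contract G Y) l \<in> U}"
    using assms(1,3) unfolding openin_space by blast
  then have "closedin (top_of_set ?face) (?face - {l \<in> ?face. cone_map n (contract G Y) l \<in> U})"
    by (simp add: openin_closedin_eq)
  moreover have "?face - {l \<in> ?face. cone_map n (contract G Y) l \<in> U}
      = {l \<in> ?face. cone_map n (contract G Y) l \<notin> U}"
    by blast
  moreover have "closedin (top_of_set (cn G)) ?face"
    using cn_contract[OF assms(2)] closedin_face by simp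
  ultimately show ?thesis
    using closedin_trans by metis
qed

lemma cone_map_outside_extension_iff:
  assumes "stable_graph g n b G" "l \<in> cn G"
  shows "cone_map n G l \<notin> U \<union> (points g n b - points g n a) \<longleftrightarrow>
    (\<exists>Y. Y \<subseteq> edges G \<and> stable_graph g n a (contract G Y) \<and> l \<in> cn (contract G Y)
       \<and> cone_map n (contract G Y) l \<notin> U)"
proof -
  have same: "cone_map n (contract G Y) l = cone_map n G l" if "Y \<subseteq> edges G" "l \<in> cn (contract G Y)" for Y
    using cone_map_contract assms(1) cn_contract that unfolding stable_graph_def by auto
  have "cone_map n G l \<notin> U \<union> (points g n b - points g n a)
      \<longleftrightarrow> cone_map n G l \<in> points g n a \<and> cone_map n G l \<notin> U"
    using cone_map_in_points[OF assms] by blast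
  also have "\<dots> \<longleftrightarrow> (\<exists>Y. Y \<subseteq> edges G \<and> stable_graph g n a (contract G Y) \<and> l \<in> cn (contract G Y))
      \<and> cone_map n G l \<notin> U"
    using cone_map_in_points_iff_face[OF assms] by simp
  also have "\<dots> \<longleftrightarrow> (\<exists>Y. Y \<subseteq> edges G \<and> stable_graph g n a (contract G Y) \<and> l \<in> cn (contract G Y)
       \<and> cone_map n (contract G Y) l \<notin> U)"
    using same by auto
  finally show ?thesis .
qed

text \<open>In the cone of a graph stable for b, the points stable for a but outside U form a finite
  union of closed sets, one for each face whose contraction is stable for a.\<close>

lemma openin_space_extend:
  assumes "le_wt n a b" "openin (space g n a) U"
  shows "openin (space g n b) (U \<union> (points g n b - points g n a))"
  unfolding openin_space
proof (intro conjI allI impI)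
  show "U \<union> (points g n b - points g n a) \<subseteq> points g n b"
    using assms points_mono unfolding openin_space by blast
next
  fix G assume G: "stable_graph g n b G"
  let ?faces = "{Y. Y \<subseteq> edges G \<and> stable_graph g n a (contract G Y)}"
  let ?outside = "\<lambda>Y. {l \<in> cn (contract G Y). cone_map n (contract G Y) l \<notin> U}"
  have "finite ?faces"
    using G unfolding stable_graph_def wf_graph_def by (auto intro: finite_subset[of _ "Pow (edges G)"])
  then have "closedin (top_of_set (cn G)) (\<Union>Y\<in>?faces. ?outside Y)"
    using closedin_face_outside[OF assms(2)] by (intro closedin_Union) auto
  moreover have "{l \<in> cn G. cone_map n G l \<in> U \<union> (points g n b - points g n a)}
      = cn G - (\<Union>Y\<in>?faces. ?outside Y)"
    using cone_map_outside_extension_iff[OF G] by blast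
  ultimately show "openin (top_of_set (cn G)) {l \<in> cn G. cone_map n G l \<in> U \<union> (points g n b - points g n a)}"
    by (simp add: openin_diff)
qed

lemma space_subtopology:
  assumes "le_wt n a b"
  shows "space g n a = subtopology (space g n b) (topspace (space g n a))"
proof (rule topology_eq[THEN iffD2], intro allI iffI)
  fix S assume "openin (space g n a) S"
  moreover have "S = (S \<union> (points g n b - points g n a)) \<inter> points g n a"
    using calculation unfolding openin_space by blast
  ultimately show "openin (subtopology (space g n b) (topspace (space g n a))) S"
    unfolding topspace_space openin_subtopology using openin_space_extend[OF assms] by blast
next
  fix S assume "openin (subtopology (space g n b) (topspace (space g n a))) S"
  then show "openin (space g n a) S"
    unfolding topspace_space openin_subtopology using openin_space_Int_points[OF assms] by blast
qed

end

section \<open>Relabelling legs\<close>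

lemma relabel_simps [simp]:
  "verts (relabel \<sigma> C) = verts C" "edges (relabel \<sigma> C) = edges C" "ends (relabel \<sigma> C) = ends C"
  "wt (relabel \<sigma> C) = wt C" "len (relabel \<sigma> C) = len C" "leg (relabel \<sigma> C) i = leg C (\<sigma> i)"
  by (simp_all add: relabel_def)

lemma zrep_relabel [simp]: "zrep (relabel \<sigma> C) Z = zrep C Z"
  unfolding relabel_def zrep_def adjrel_def by simp

lemma contract_relabel: "contract (relabel \<sigma> G) Z = relabel \<sigma> (contract G Z)"
  by (simp add: contract_def) (simp add: relabel_def)

lemma relabel_len_update: "relabel \<sigma> (C\<lparr>len := l\<rparr>) = (relabel \<sigma> C)\<lparr>len := l\<rparr>"
  by (simp add: relabel_def)

lemma relabel_relabel: "relabel \<tau> (relabel \<sigma> C) = relabel (\<sigma> \<circ> \<tau>) C"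
  by (simp add: relabel_def)

lemma relabel_id: "relabel id C = C"
  by (simp add: relabel_def)

lemma iso_via_relabel:
  assumes "\<sigma> permutes {1..n}" "iso_via n f h C D"
  shows "iso_via n f h (relabel \<sigma> C) (relabel \<sigma> D)"
  using assms permutes_in_image[OF assms(1)] unfolding iso_via_def by simp

lemma relabel_map_iso_class:
  assumes "\<sigma> permutes {1..n}"
  shows "relabel_map n \<sigma> (iso_class n C) = iso_class n (relabel \<sigma> C)"
proof (intro equalityI subsetI)
  fix D assume "D \<in> relabel_map n \<sigma> (iso_class n C)"
  then obtain C' where "curve_iso n C C'" "curve_iso n (relabel \<sigma> C') D"
    unfolding relabel_map_def iso_class_def by blast
  then show "D \<in> iso_class n (relabel \<sigma> C)"
    using iso_via_relabel[OF assms] curve_iso_trans unfolding iso_class_def curve_iso_iff_iso_via by blast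
next
  fix D assume "D \<in> iso_class n (relabel \<sigma> C)"
  then show "D \<in> relabel_map n \<sigma> (iso_class n C)"
    unfolding relabel_map_def iso_class_def using curve_iso_refl by blast
qed

lemma legwt_relabel:
  assumes perm: "\<sigma> permutes {1..n}" and ab: "\<forall>i\<in>{1..n}. b i = a (\<sigma> i)"
  shows "legwt n b (relabel \<sigma> C) v = legwt n a C v"
proof -
  have "\<sigma> ` {i\<in>{1..n}. leg C (\<sigma> i) = v} = {j\<in>{1..n}. leg C j = v}"
  proof (intro equalityI subsetI)
    fix j assume "j \<in> {j\<in>{1..n}. leg C j = v}"
    moreover have "inv \<sigma> j \<in> {1..n} \<longleftrightarrow> j \<in> {1..n}" "\<sigma> (inv \<sigma> j) = j"
      using permutes_in_image[OF permutes_inv[OF perm]] permutes_inverses(1)[OF perm] by auto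
    ultimately show "j \<in> \<sigma> ` {i\<in>{1..n}. leg C (\<sigma> i) = v}"
      by (metis (mono_tags, lifting) image_eqI mem_Collect_eq)
  qed (use permutes_in_image[OF perm] in auto)
  moreover have "inj_on \<sigma> {i\<in>{1..n}. leg C (\<sigma> i) = v}"
    using permutes_inj_on[OF perm] by (rule inj_on_subset) auto
  ultimately show ?thesis
    unfolding legwt_def using ab sum.reindex[of \<sigma> "{i\<in>{1..n}. leg C (\<sigma> i) = v}" a] by simp
qed

lemma stable_graph_relabel:
  assumes perm: "\<sigma> permutes {1..n}" and ab: "\<forall>i\<in>{1..n}. b i = a (\<sigma> i)"
    and st: "stable_graph g n a C"
  shows "stable_graph g n b (relabel \<sigma> C)"
proof -
  have "genus (relabel \<sigma> C) = genus C" "val (relabel \<sigma> C) = val C"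
    by (simp_all add: genus_def val_def fun_eq_iff)
  moreover have "wf_graph n (relabel \<sigma> C)"
    using st permutes_in_image[OF perm] unfolding stable_graph_def wf_graph_def adjrel_def by simp
  ultimately show ?thesis
    using st legwt_relabel[OF perm ab] unfolding stable_graph_def by simp
qed

context tropical_moduli
begin

lemma relabel_map_in_points:
  assumes "\<sigma> permutes {1..n}" "\<forall>i\<in>{1..n}. b i = a (\<sigma> i)" "p \<in> points g n a"
  shows "relabel_map n \<sigma> p \<in> points g n b"
  using assms stable_graph_relabel relabel_map_iso_class admissible_relabel unfolding points_def by fastforce

lemma cone_map_relabel:
  "\<sigma> permutes {1..n} \<Longrightarrow> cone_map n (relabel \<sigma> G) l = relabel_map n \<sigma> (cone_map n G l)"
  unfolding cone_map_def by (simp add: relabel_map_iso_class contract_relabel relabel_len_update)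

lemma continuous_map_relabel:
  assumes "\<sigma> permutes {1..n}" "\<forall>i\<in>{1..n}. b i = a (\<sigma> i)"
  shows "continuous_map (space g n a) (space g n b) (relabel_map n \<sigma>)"
  unfolding continuous_map_def topspace_space
proof (intro conjI allI impI)
  show "relabel_map n \<sigma> \<in> points g n a \<rightarrow> points g n b"
    using relabel_map_in_points[OF assms] by blast
next
  fix U assume U: "openin (space g n b) U"
  show "openin (space g n a) {p \<in> points g n a. relabel_map n \<sigma> p \<in> U}"
    unfolding openin_space
  proof (intro conjI allI impI)
    fix G assume G: "stable_graph g n a G"
    have "{l \<in> cn G. cone_map n G l \<in> {p \<in> points g n a. relabel_map n \<sigma> p \<in> U}}
        = {l \<in> cn (relabel \<sigma> G). cone_map n (relabel \<sigma> G) l \<in> U}"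
      using cone_map_in_points[OF G] cn_relabel cone_map_relabel[OF assms(1)] by auto
    moreover have "openin (top_of_set (cn (relabel \<sigma> G))) {l \<in> cn (relabel \<sigma> G). cone_map n (relabel \<sigma> G) l \<in> U}"
      using U stable_graph_relabel[OF assms G] unfolding openin_space by blast
    ultimately show "openin (top_of_set (cn G)) {l \<in> cn G. cone_map n G l \<in> {p \<in> points g n a. relabel_map n \<sigma> p \<in> U}}"
      by (simp only: cn_relabel)
  qed blast
qed

lemma homeomorphic_map_relabel:
  assumes perm: "\<sigma> permutes {1..n}" and ab: "\<forall>i\<in>{1..n}. b i = a (\<sigma> i)"
  shows "homeomorphic_map (space g n a) (space g n b) (relabel_map n \<sigma>)"
proof -
  have perm': "inv \<sigma> permutes {1..n}"
    using perm by (rule permutes_inv)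
  have ba: "\<forall>i\<in>{1..n}. a i = b (inv \<sigma> i)"
    using ab permutes_inverses(1)[OF perm] permutes_in_image[OF perm'] by metis
  have inverse: "relabel_map n \<tau>' (relabel_map n \<tau> p) = p"
    if "\<tau> permutes {1..n}" "\<tau>' permutes {1..n}" "\<tau> \<circ> \<tau>' = id" "p \<in> points g n c" for \<tau> \<tau>' c p
    using that relabel_map_iso_class relabel_relabel relabel_id unfolding points_def by auto
  show ?thesis
    unfolding homeomorphic_map_maps homeomorphic_maps_def topspace_space
    using continuous_map_relabel[OF perm ab] continuous_map_relabel[OF perm' ba]
      inverse[OF perm perm'] inverse[OF perm' perm] permutes_inverses[OF perm]
    by (auto simp: fun_eq_iff intro!: exI[of _ "relabel_map n (inv \<sigma>)"])
qed

end

section \<open>Chambers\<close>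

lemma weight_bounds_if_in_wregion:
  "a \<in> wregion g n \<Longrightarrow> i \<in> {1..n} \<Longrightarrow> 0 < a i \<and> a i \<le> 1"
  unfolding wregion_def by simp

lemma connected_above_value:
  fixes f :: "'a::topological_space \<Rightarrow> real"
  assumes "connected T" "continuous_on T f" "c \<notin> f ` T" "x \<in> T" "y \<in> T" "c < f x"
  shows "c < f y"
proof (rule ccontr)
  assume "\<not> c < f y"
  moreover have "connected (f ` T)"
    using assms(2,1) by (rule connected_continuous_image)
  ultimately have "c \<in> f ` T"
    using assms(4-6) unfolding connected_iff_interval by (meson imageI less_imp_le not_less)
  with assms(3) show False ..
qed

lemma sum_gt_one_iff_if_same_chamber:
  assumes cc: "connected_component (wregion g n - walls n) a b" and S: "S \<subseteq> {1..n}"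
  shows "1 < (\<Sum>i\<in>S. a i) \<longleftrightarrow> 1 < (\<Sum>i\<in>S. b i)"
proof (cases "2 \<le> card S")
  case True
  obtain T where T: "connected T" "T \<subseteq> wregion g n - walls n" "a \<in> T" "b \<in> T"
    using cc unfolding connected_component_def by blast
  let ?sum = "\<lambda>c :: nat \<Rightarrow> real. \<Sum>i\<in>S. c i"
  have "continuous_on T ?sum"
    by (intro continuous_on_sum continuous_on_subset[OF continuous_on_product_coordinates]) auto
  moreover have "1 \<notin> ?sum ` T"
  proof
    assume "1 \<in> ?sum ` T"
    then obtain c where "c \<in> T" "?sum c = 1"
      by force
    then have "c \<in> walls n"
      using S True unfolding walls_def by blast
    with \<open>c \<in> T\<close> T(2) show False
      by blast
  qed
  ultimately show ?thesis
    using connected_above_value[OF T(1)] T(3,4) by metis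
next
  case False
  have "a \<in> wregion g n" "b \<in> wregion g n"
    using connected_component_in[OF cc] by auto
  then have "a i \<le> 1" "b i \<le> 1" if "i \<in> S" for i
    using weight_bounds_if_in_wregion S that by (meson subsetD)+
  then have "(\<Sum>i\<in>S. a i) \<le> real (card S) * 1" "(\<Sum>i\<in>S. b i) \<le> real (card S) * 1"
    by (intro sum_bounded_above; simp)+
  moreover have "real (card S) \<le> 1"
    using False by simp
  ultimately show ?thesis
    by linarith
qed

lemma vertex_stable_iff:
  fixes k :: int and a :: "nat \<Rightarrow> real"
  assumes "-1 \<le> k" "finite S" "\<forall>i\<in>S. 0 < a i"
  shows "0 < k + (\<Sum>i\<in>S. a i) \<longleftrightarrow> 1 \<le> k \<or> (k = 0 \<and> S \<noteq> {}) \<or> (k = -1 \<and> 1 < (\<Sum>i\<in>S. a i))"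
proof -
  have nonneg: "0 \<le> (\<Sum>i\<in>S. a i)"
    using assms(3) by (simp add: sum_nonneg less_imp_le)
  have pos: "0 < (\<Sum>i\<in>S. a i)" if "S \<noteq> {}"
    using assms(2,3) that by (intro sum_pos) auto
  consider "1 \<le> k" | "k = 0" | "k = -1"
    using assms(1) by linarith
  then show ?thesis
  proof cases
    case 1
    then have "1 \<le> real_of_int k"
      by simp
    then show ?thesis
      using 1 nonneg by linarith
  next
    case 2
    then show ?thesis
      using pos by (cases "S = {}") auto
  next
    case 3
    then show ?thesis
      by simp
  qed
qed

lemma genus_eq_wt_if_val_zero:
  assumes wf: "wf_graph n C" and v: "v \<in> verts C" and val: "val C v = 0"
  shows "genus C = int (wt C v)"
proof -
  have "finite (edges C)"
    using wf unfolding wf_graph_def by blast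
  then have "{e\<in>edges C. fst (ends C e) = v} = {}" "{e\<in>edges C. snd (ends C e) = v} = {}"
    using val unfolding val_def by simp_all
  then have no_edge: "fst (ends C e) \<noteq> v" "snd (ends C e) \<noteq> v" if "e \<in> edges C" for e
    using that by blast+
  have "u = v" if "u \<in> verts C" for u
  proof -
    have "(u, v) \<in> (adjrel C (edges C))\<^sup>*"
      using wf that v unfolding wf_graph_def by simp
    then show ?thesis
    proof (cases rule: rtranclE)
      case (step y)
      then obtain e where "e \<in> edges C" "ends C e = (y, v) \<or> ends C e = (v, y)"
        by (auto simp: adjrel_iff)
      then show ?thesis
        using no_edge by force
    qed simp
  qed
  then have "verts C = {v}"
    using v by blast
  moreover have "edges C = {}"
  proof (rule ccontr)
    assume "edges C \<noteq> {}"
    then obtain e where "e \<in> edges C"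
      by blast
    then have "fst (ends C e) \<in> {v}"
      using wf_graph_ends[OF wf] \<open>verts C = {v}\<close> by blast
    with no_edge \<open>e \<in> edges C\<close> show False
      by blast
  qed
  ultimately show ?thesis
    by (simp add: genus_def)
qed

lemma stable_graph_eq_if_same_chamber:
  assumes g: "g \<ge> 1" and cc: "connected_component (wregion g n - walls n) a b"
  shows "stable_graph g n a = stable_graph g n b"
proof (intro ext)
  fix G
  have "a \<in> wregion g n" "b \<in> wregion g n"
    using connected_component_in[OF cc] by auto
  then have pos: "\<forall>i\<in>{1..n}. 0 < a i \<and> 0 < b i"
    using weight_bounds_if_in_wregion by meson
  have "0 < 2 * real (wt G v) - 2 + real (val G v) + legwt n a G v
      \<longleftrightarrow> 0 < 2 * real (wt G v) - 2 + real (val G v) + legwt n b G v"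
    if wf: "wf_graph n G" and genus: "genus G = int g" and v: "v \<in> verts G" for v
  proof -
    define k where "k = 2 * int (wt G v) - 2 + int (val G v)"
    define S where "S = {i\<in>{1..n}. leg G i = v}"
    have "\<not> (wt G v = 0 \<and> val G v = 0)"
      using genus_eq_wt_if_val_zero[OF wf v] genus g by auto
    then have "-1 \<le> k"
      unfolding k_def by (cases "wt G v = 0") auto
    moreover have "2 * real (wt G v) - 2 + real (val G v) = real_of_int k"
      unfolding k_def by simp
    moreover have "S \<subseteq> {1..n}" "finite S"
      unfolding S_def by auto
    moreover have "legwt n c G v = (\<Sum>i\<in>S. c i)" for c
      unfolding legwt_def S_def ..
    moreover have "\<forall>i\<in>S. 0 < a i" "\<forall>i\<in>S. 0 < b i"
      using pos \<open>S \<subseteq> {1..n}\<close> by auto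
    ultimately show ?thesis
      using vertex_stable_iff[of k S a] vertex_stable_iff[of k S b]
        sum_gt_one_iff_if_same_chamber[OF cc \<open>S \<subseteq> {1..n}\<close>] by simp
  qed
  then show "stable_graph g n a G = stable_graph g n b G"
    unfolding stable_graph_def by (metis (no_types, lifting))
qed

context tropical_moduli
begin

lemma space_eq_if_same_chamber:
  assumes "g \<ge> 1" "same_chamber g n a b"
  shows "space g n a = space g n b"
proof -
  have "stable_graph g n a = stable_graph g n b"
    using stable_graph_eq_if_same_chamber assms unfolding same_chamber_def by blast
  then show ?thesis
    unfolding space_def points_def by simp
qed

end

definition finite_lengths :: "tcurve \<Rightarrow> bool" where
  "finite_lengths C \<longleftrightarrow> (\<forall>e\<in>edges C. 0 < len C e \<and> len C e < \<infinity>)"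

definition positive_lengths :: "tcurve \<Rightarrow> bool" where
  "positive_lengths C \<longleftrightarrow> (\<forall>e\<in>edges C. 0 < len C e)"

interpretation M: tropical_moduli finite_lengths cone
  by unfold_locales (auto simp: finite_lengths_def cone_def order_less_le)

interpretation Mbar: tropical_moduli positive_lengths ext_cone
  by unfold_locales (auto simp: positive_lengths_def ext_cone_def order_less_le)

lemma tropM_eq_space: "tropM = M.space"
proof (intro ext)
  fix g n a
  show "tropM g n a = M.space g n a"
    unfolding tropM_def M.space_def M.points_def by (simp add: trop_curve_def finite_lengths_def)
qed

lemma tropMbar_eq_space: "tropMbar = Mbar.space"
proof (intro ext)
  fix g n a
  show "tropMbar g n a = Mbar.space g n a"
    unfolding tropMbar_def Mbar.space_def Mbar.points_def by (simp add: ext_trop_curve_def positive_lengths_def)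
qed

lemma iso_class_has_unit_length_iff: "(\<exists>C\<in>iso_class n C0. total_len C = 1) \<longleftrightarrow> total_len C0 = 1"
  using total_len_iso curve_iso_refl unfolding iso_class_def by fastforce

lemma tropDelta_eq_subtopology:
  "tropDelta g n a = subtopology (M.space g n a) (M.points g n a \<inter> {p. \<exists>C\<in>p. total_len C = 1})"
  unfolding tropDelta_def tropM_eq_space M.topspace_space by (simp add: Collect_conj_eq)

lemma tropDelta_subtopology:
  assumes "le_wt n a b"
  shows "tropDelta g n a = subtopology (tropDelta g n b) (topspace (tropDelta g n a))"
proof -
  let ?U = "\<lambda>c. M.points g n c \<inter> {p. \<exists>C\<in>p. total_len C = 1}"
  have sub: "?U a \<subseteq> ?U b" "?U a \<subseteq> M.points g n a"
    using M.points_mono[OF assms] by auto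
  have "M.space g n a = subtopology (M.space g n b) (M.points g n a)"
    using M.space_subtopology[OF assms] unfolding M.topspace_space .
  then have "tropDelta g n a = subtopology (subtopology (M.space g n b) (M.points g n a)) (?U a)"
    unfolding tropDelta_eq_subtopology by (rule arg_cong)
  also have "\<dots> = subtopology (M.space g n b) (?U a)"
    using sub(2) by (simp add: subtopology_subtopology Int_absorb1)
  also have "\<dots> = subtopology (tropDelta g n b) (topspace (tropDelta g n a))"
    unfolding tropDelta_eq_subtopology subtopology_subtopology
    using sub(1) by (simp add: M.topspace_space Int_absorb2 Int_absorb1)
  finally show ?thesis .
qed

lemma homeomorphic_map_tropDelta_relabel:
  assumes perm: "\<sigma> permutes {1..n}" and ab: "\<forall>i\<in>{1..n}. b i = a (\<sigma> i)"
  shows "homeomorphic_map (tropDelta g n a) (tropDelta g n b) (relabel_map n \<sigma>)"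
  unfolding tropDelta_def tropM_eq_space
proof (rule homeomorphic_map_subtopologies_alt[OF M.homeomorphic_map_relabel[OF assms]])
  fix p assume "p \<in> topspace (M.space g n a)"
  then obtain C where C: "p = iso_class n C"
    unfolding M.topspace_space M.points_def by blast
  then have "relabel_map n \<sigma> p = iso_class n (relabel \<sigma> C)"
    using relabel_map_iso_class[OF perm] by simp
  moreover have "total_len (relabel \<sigma> C) = total_len C"
    by (simp add: total_len_def)
  moreover have "iso_class n (relabel \<sigma> C) \<in> M.points g n b"
    using M.relabel_map_in_points[OF assms, of p] \<open>p \<in> topspace (M.space g n a)\<close> C calculation(1)
    unfolding M.topspace_space by simp
  ultimately show "(relabel_map n \<sigma> p \<in> {q \<in> topspace (M.space g n b). \<exists>C\<in>q. total_len C = 1}) =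
      (p \<in> {q \<in> topspace (M.space g n a). \<exists>C\<in>q. total_len C = 1})"
    using \<open>p \<in> topspace (M.space g n a)\<close> C
    by (simp add: M.topspace_space iso_class_has_unit_length_iff)
qed

lemma chamber_orbit_representative:
  assumes "in_some_chamber g n a" "perm_wt n \<sigma> ` chamber g n a = chamber g n b"
  shows "same_chamber g n b (perm_wt n \<sigma> a)" "\<forall>i\<in>{1..n}. perm_wt n \<sigma> a i = a (\<sigma> i)"
proof -
  have "a \<in> chamber g n a"
    using assms(1) unfolding in_some_chamber_def chamber_def by (simp add: connected_component_refl)
  then show "same_chamber g n b (perm_wt n \<sigma> a)"
    using assms(2) unfolding chamber_def same_chamber_def by blast
  show "\<forall>i\<in>{1..n}. perm_wt n \<sigma> a i = a (\<sigma> i)"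
    unfolding perm_wt_def by simp
qed

lemma moduli_cases:
  assumes "X \<in> {tropM, tropMbar, tropDelta}"
  obtains "X = M.space" | "X = Mbar.space" | "X = tropDelta"
  using assms unfolding tropM_eq_space tropMbar_eq_space by blast

lemma moduli_subtopology:
  assumes "X \<in> {tropM, tropMbar, tropDelta}" "le_wt n a b"
  shows "X g n a = subtopology (X g n b) (topspace (X g n a))"
  using assms(1) by (rule moduli_cases)
    (use M.space_subtopology[OF assms(2)] Mbar.space_subtopology[OF assms(2)]
      tropDelta_subtopology[OF assms(2)] in auto)

lemma moduli_eq_if_same_chamber:
  assumes "X \<in> {tropM, tropMbar, tropDelta}" "g \<ge> 1" "same_chamber g n a b"
  shows "X g n a = X g n b"
  using assms(1) by (rule moduli_cases)
    (use M.space_eq_if_same_chamber[OF assms(2,3)] Mbar.space_eq_if_same_chamber[OF assms(2,3)]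
      in \<open>auto simp: tropDelta_def tropM_eq_space\<close>)

lemma moduli_homeomorphic_map_relabel:
  assumes "X \<in> {tropM, tropMbar, tropDelta}" "\<sigma> permutes {1..n}" "\<forall>i\<in>{1..n}. b i = a (\<sigma> i)"
  shows "homeomorphic_map (X g n a) (X g n b) (relabel_map n \<sigma>)"
  using assms(1) by (rule moduli_cases)
    (use M.homeomorphic_map_relabel[OF assms(2,3)] Mbar.homeomorphic_map_relabel[OF assms(2,3)]
      homeomorphic_map_tropDelta_relabel[OF assms(2,3)] in auto)

lemma moduli_homeomorphic_map_chamber_orbit:
  assumes X: "X \<in> {tropM, tropMbar, tropDelta}" and "g \<ge> 1"
    and \<sigma>: "\<sigma> permutes {1..n}" and "in_some_chamber g n a" "perm_wt n \<sigma> ` chamber g n a = chamber g n b"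
  shows "homeomorphic_map (X g n a) (X g n b) (relabel_map n \<sigma>)"
proof -
  let ?c = "perm_wt n \<sigma> a"
  have c: "same_chamber g n b ?c" "\<forall>i\<in>{1..n}. ?c i = a (\<sigma> i)"
    using chamber_orbit_representative assms(4,5) by blast+
  have "X g n b = X g n ?c"
    using X assms(2) c(1) by (rule moduli_eq_if_same_chamber)
  moreover have "homeomorphic_map (X g n a) (X g n ?c) (relabel_map n \<sigma>)"
    using X \<sigma> c(2) by (rule moduli_homeomorphic_map_relabel)
  ultimately show ?thesis
    by simp
qed

theorem mainTheorem6:
  fixes g n :: nat and a b :: "nat \<Rightarrow> real"
  assumes "g \<ge> 1" and "n \<ge> 1"
    and "weight_datum g n a" and "weight_datum g n b"
  shows "\<forall>X \<in> {tropM, tropMbar, tropDelta}.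
     (le_wt n a b \<longrightarrow> X g n a = subtopology (X g n b) (topspace (X g n a)))
   \<and> (same_chamber g n a b \<longrightarrow> X g n a = X g n b)
   \<and> ((\<exists>\<sigma>. \<sigma> permutes {1..n} \<and> (\<forall>i\<in>{1..n}. b i = a (\<sigma> i))) \<longrightarrow>
        (\<exists>\<tau>. \<tau> permutes {1..n} \<and> homeomorphic_map (X g n a) (X g n b) (relabel_map n \<tau>)))
   \<and> ((in_some_chamber g n a \<and> in_some_chamber g n b \<and>
        (\<exists>\<sigma>. \<sigma> permutes {1..n} \<and> perm_wt n \<sigma> ` chamber g n a = chamber g n b)) \<longrightarrow>
        (\<exists>\<tau>. \<tau> permutes {1..n} \<and> homeomorphic_map (X g n a) (X g n b) (relabel_map n \<tau>)))"
proof (intro ballI conjI impI)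
  fix X assume X: "X \<in> {tropM, tropMbar, tropDelta}"
  show "X g n a = subtopology (X g n b) (topspace (X g n a))" if "le_wt n a b"
    using X that by (rule moduli_subtopology)
  show "X g n a = X g n b" if "same_chamber g n a b"
    using X assms(1) that by (rule moduli_eq_if_same_chamber)
  show "\<exists>\<tau>. \<tau> permutes {1..n} \<and> homeomorphic_map (X g n a) (X g n b) (relabel_map n \<tau>)"
    if "\<exists>\<sigma>. \<sigma> permutes {1..n} \<and> (\<forall>i\<in>{1..n}. b i = a (\<sigma> i))"
    using that moduli_homeomorphic_map_relabel[OF X, of _ n b a g] by blast
  show "\<exists>\<tau>. \<tau> permutes {1..n} \<and> homeomorphic_map (X g n a) (X g n b) (relabel_map n \<tau>)"
    if "in_some_chamber g n a \<and> in_some_chamber g n b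
      \<and> (\<exists>\<sigma>. \<sigma> permutes {1..n} \<and> perm_wt n \<sigma> ` chamber g n a = chamber g n b)"
    using that moduli_homeomorphic_map_chamber_orbit[OF X assms(1)] by blast
qed

end
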